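(* Let $x^*=(u^*,q^*,\alpha^*,r^*,\delta^*,\theta^* )$ be feasible for $(\mathrm{P}_{TV})$, assume that $\nabla_\alpha Q(\alpha^* )^\top$ has full rank, that $\mathcal B(x^* )\cap\{i:Q(\alpha^* )_i=0\}=\emptyset$, and that $x^*$ is strongly stationary (there exist multipliers satisfying the stationarity system below together with $\gamma_i\ge0,\nu_i\ge0$ on $\mathcal B(x^* )$). Suppose that for every multiplier vector $(p,\lambda^x,\lambda^y,\varphi^x,\varphi^y,\rho,\sigma,\gamma,\nu)$ satisfying the M-stationarity system below, and every nonzero critical direction $d=(d_u,d_q,d_\alpha,d_r,d_\delta,d_\theta)\in\mathcal C(x^* )$, \begin{multline*} \langle\nabla^2\mathcal J(u^* )d_u,d_u\rangle-D^3\mathcal D(u^* )[p,d_u,d_u]-\Big(\sum_{i\in\mathcal I\cup\mathcal B}\|\varphi_i\|^2\Big)\|\mathbb K\|^2\|d_u\|^2-\sum_{i=1}^m(\rho_i+\nu_i)\,d_\alpha^\top\nabla^2Q_i(\alpha^* )d_\alpha\\ -\Big(\sum_{i\in\mathcal I}\|(\mathbb Kp)_i\|^2\Big)\Big(\sum_{i\in\mathcal I}(\nabla Q_i(\alpha^* )^\top d_\alpha)^2\Big)+\sum_{i\in\mathcal I}(\delta^*_i\nu_i-2)d_{\theta,i}^2+\sum_{i\in\mathcal B}(\delta^*_i\nu_i-1)d_{\theta,i}^2>0, \end{multline*} where $\mathcal I=\mathcal I(x^* )$, $\mathcal B=\mathcal B(x^* )$, $\varphi_i=(\varphi^x_i,\varphi^y_i)^\top$.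 Then $x^*$ is a strict local minimizer of $(\mathrm{P}_{TV})$.
   Context: Let $d,m,k\ge1$. Let $K_x,K_y\in\mathbb R^{m\times d}$ and define the linear map $\mathbb K:\mathbb R^d\to(\mathbb R^2)^m$ by $(\mathbb Ku)_i=((K_xu)_i,(K_yu)_i)^\top$, with operator norm $\|\mathbb K\|$. For $q=(q_1,\dots,q_m)\in(\mathbb R^2)^m$ with $q_i=(q_i^x,q_i^y)^\top$ write $q^x=(q^x_i)_i,\ q^y=(q^y_i)_i\in\mathbb R^m$ and $\mathbb K^\top q:=K_x^\top q^x+K_y^\top q^y$. Let $\mathcal D:\mathbb R^d\to\mathbb R$ be convex and three times continuously differentiable (gradient $\nabla\mathcal D$, Hessian $\nabla^2\mathcal D$, third derivative $D^3\mathcal D$ as a trilinear form), $\mathcal J:\mathbb R^d\to\mathbb R$ twice continuously differentiable, and $Q:\mathbb R^k\to\mathbb R^m$ twice continuously differentiable with components $Q_i=Q(\cdot)_i$; $\nabla_\alpha Q(\alpha)^\top\in\mathbb R^{k\times m}$ denotes the transpose of the Jacobian, "full rank" means rank $\min(k,m)$. $\circ$ is the componentwise product; $\cos,\sin$ act componentwise. Problem $(\mathrm{P}_{TV})$: minimize $\mathcal J(u)$ over $x=(u,q,\alpha,r,\delta,\theta)\in\mathbb R^d\times(\mathbb R^2)^m\times\mathbb R^k\times\mathbb R^m\times\mathbb R^m\times\mathbb R^m$ subject to $\nabla\mathcal D(u)+\mathbb K^\top q=0$; $(\mathbb Ku)_i=r_i(\cos\theta_i,\sin\theta_i)^\top$,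 $q_i=\delta_i(\cos\theta_i,\sin\theta_i)^\top$ ($i=1,\dots,m$); $Q(\alpha)\ge0$; $\delta\ge0$; $0\le r_i\perp(Q(\alpha)_i-\delta_i)\ge0$ ($i=1,\dots,m$). Index sets: $\mathcal A(x)=\{i:r_i=0,Q(\alpha)_i>\delta_i\}$, $\mathcal I(x)=\{i:r_i>0,Q(\alpha)_i=\delta_i\}$, $\mathcal B(x)=\{i:r_i=0,Q(\alpha)_i=\delta_i\}$. M-stationarity system (multipliers $p\in\mathbb R^d$, $\lambda^x,\lambda^y,\varphi^x,\varphi^y,\rho,\sigma,\gamma,\nu\in\mathbb R^m$): $\nabla\mathcal J(u^* )-\nabla^2\mathcal D(u^* )p-K_x^\top\varphi^x-K_y^\top\varphi^y=0$; $\nabla_\alpha Q(\alpha^* )^\top(\rho+\nu)=0$; $\lambda^x=K_xp$, $\lambda^y=K_yp$; $\cos\theta^*\circ\varphi^x+\sin\theta^*\circ\varphi^y-\gamma=0$; $-\cos\theta^*\circ\lambda^x-\sin\theta^*\circ\lambda^y-\sigma+\nu=0$; $\sin\theta^*\circ(-r^*\circ\varphi^x+\delta^*\circ\lambda^x)-\cos\theta^*\circ(-r^*\circ\varphi^y+\delta^*\circ\lambda^y)=0$; $0\le Q(\alpha^* )\perp\rho\ge0$; $0\le\delta^*\perp\sigma\ge0$; $\nu_i=0$ on $\mathcal A(x^* )$; $\gamma_i=0$ on $\mathcal I(x^* )$; and on $\mathcal B(x^* )$ either $\gamma_i\nu_i=0$ or $\gamma_i,\nu_i\ge0$. Critical cone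 $\mathcal C(x^* )$: directions $d=(d_u,d_q,d_\alpha,d_r,d_\delta,d_\theta)$ with $\nabla\mathcal J(u^* )^\top d_u\le0$ and $-\nabla^2\mathcal D(u^* )d_u-K_x^\top d_q^x-K_y^\top d_q^y=0$; $-K_xd_u+\cos\theta^*\circ d_r-r^*\circ\sin\theta^*\circ d_\theta=0$; $-K_yd_u+\sin\theta^*\circ d_r+r^*\circ\cos\theta^*\circ d_\theta=0$; $d_q^x-\cos\theta^*\circ d_\delta+\delta^*\circ\sin\theta^*\circ d_\theta=0$; $d_q^y-\sin\theta^*\circ d_\delta-\delta^*\circ\cos\theta^*\circ d_\theta=0$; $\nabla Q_i(\alpha^* )^\top d_\alpha\ge0$ if $Q(\alpha^* )_i=0$; $d_{\delta,i}\ge0$ if $\delta^*_i=0$; $\nabla Q_i(\alpha^* )^\top d_\alpha=d_{\delta,i}$ for $i\in\mathcal I(x^* )$; $d_{r,i}=0$ for $i\in\mathcal A(x^* )$; and $0\le(\nabla Q_i(\alpha^* )^\top d_\alpha-d_{\delta,i})\perp d_{r,i}\ge0$ for $i\in\mathcal B(x^* )$. *)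

theory Defs
  imports "HOL-Analysis.Analysis"
begin

text \<open>Points x = (u, q^x, q^y, alpha, r, delta, theta); q in (R^2)^m is stored as the pair (q^x, q^y).
  Types: 'd, 'm, 'k are finite index types of the dimensions d, m, k.\<close>

type_synonym ('d,'m,'k) pt =
  "(real^'d) \<times> (real^'m) \<times> (real^'m) \<times> (real^'k) \<times> (real^'m) \<times> (real^'m) \<times> (real^'m)"

text \<open>Operator norm of the map u |-> ((K_x u)_i,(K_y u)_i)_i into (R^2)^m with the Euclidean norm;
  the product norm on real^'m * real^'m is exactly that Euclidean norm.\<close>
definition opnormK :: "real^'d^'m \<Rightarrow> real^'d^'m \<Rightarrow> real" where
  "opnormK Kx Ky = onorm (\<lambda>u. (Kx *v u, Ky *v u))"

definition feasible_TV ::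
  "real^'d^'m \<Rightarrow> real^'d^'m \<Rightarrow> (real^'d \<Rightarrow> real^'d) \<Rightarrow> (real^'k \<Rightarrow> real^'m) \<Rightarrow> ('d,'m,'k) pt \<Rightarrow> bool" where
  "feasible_TV Kx Ky gradD Q x = (case x of (u, qx, qy, \<alpha>, r, \<delta>, \<theta>) \<Rightarrow>
     gradD u + transpose Kx *v qx + transpose Ky *v qy = 0 \<and>
     (\<forall>i. (Kx *v u) $ i = r $ i * cos (\<theta> $ i) \<and> (Ky *v u) $ i = r $ i * sin (\<theta> $ i)) \<and>
     (\<forall>i. qx $ i = \<delta> $ i * cos (\<theta> $ i) \<and> qy $ i = \<delta> $ i * sin (\<theta> $ i)) \<and>
     (\<forall>i. Q \<alpha> $ i \<ge> 0) \<and> (\<forall>i. \<delta> $ i \<ge> 0) \<and>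
     (\<forall>i. r $ i \<ge> 0 \<and> Q \<alpha> $ i - \<delta> $ i \<ge> 0 \<and> r $ i * (Q \<alpha> $ i - \<delta> $ i) = 0))"

definition idxA :: "(real^'k \<Rightarrow> real^'m) \<Rightarrow> ('d,'m,'k) pt \<Rightarrow> 'm set" where
  "idxA Q x = (case x of (u, qx, qy, \<alpha>, r, \<delta>, \<theta>) \<Rightarrow> {i. r $ i = 0 \<and> Q \<alpha> $ i > \<delta> $ i})"

definition idxI :: "(real^'k \<Rightarrow> real^'m) \<Rightarrow> ('d,'m,'k) pt \<Rightarrow> 'm set" where
  "idxI Q x = (case x of (u, qx, qy, \<alpha>, r, \<delta>, \<theta>) \<Rightarrow> {i. r $ i > 0 \<and> Q \<alpha> $ i = \<delta> $ i})"

definition idxB :: "(real^'k \<Rightarrow> real^'m) \<Rightarrow> ('d,'m,'k) pt \<Rightarrow> 'm set" where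
  "idxB Q x = (case x of (u, qx, qy, \<alpha>, r, \<delta>, \<theta>) \<Rightarrow> {i. r $ i = 0 \<and> Q \<alpha> $ i = \<delta> $ i})"

text \<open>M-stationarity system at x for multipliers
  (p, lambda^x, lambda^y, phi^x, phi^y, rho, sigma, gamma, nu).
  gradJ, hessD are gradient of J and Hessian of D; JQ a is the Jacobian of Q at a
  (row i = gradient of Q_i), so transpose (JQ a) is nabla_alpha Q(a)^T.\<close>
definition M_stationary ::
  "real^'d^'m \<Rightarrow> real^'d^'m \<Rightarrow> (real^'d \<Rightarrow> real^'d) \<Rightarrow> (real^'d \<Rightarrow> real^'d^'d) \<Rightarrow>
   (real^'k \<Rightarrow> real^'m) \<Rightarrow> (real^'k \<Rightarrow> real^'k^'m) \<Rightarrow> ('d,'m,'k) pt \<Rightarrow>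
   real^'d \<Rightarrow> real^'m \<Rightarrow> real^'m \<Rightarrow> real^'m \<Rightarrow> real^'m \<Rightarrow> real^'m \<Rightarrow> real^'m \<Rightarrow> real^'m \<Rightarrow> real^'m \<Rightarrow> bool" where
  "M_stationary Kx Ky gradJ hessD Q JQ x p lx ly fx fy \<rho> \<sigma> \<gamma> \<nu> =
   (case x of (u, qx, qy, \<alpha>, r, \<delta>, \<theta>) \<Rightarrow>
     gradJ u - hessD u *v p - transpose Kx *v fx - transpose Ky *v fy = 0 \<and>
     transpose (JQ \<alpha>) *v (\<rho> + \<nu>) = 0 \<and>
     lx = Kx *v p \<and> ly = Ky *v p \<and>
     (\<forall>i. cos (\<theta> $ i) * fx $ i + sin (\<theta> $ i) * fy $ i - \<gamma> $ i = 0) \<and>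
     (\<forall>i. - cos (\<theta> $ i) * lx $ i - sin (\<theta> $ i) * ly $ i - \<sigma> $ i + \<nu> $ i = 0) \<and>
     (\<forall>i. sin (\<theta> $ i) * (- r $ i * fx $ i + \<delta> $ i * lx $ i)
          - cos (\<theta> $ i) * (- r $ i * fy $ i + \<delta> $ i * ly $ i) = 0) \<and>
     (\<forall>i. 0 \<le> Q \<alpha> $ i \<and> 0 \<le> \<rho> $ i \<and> Q \<alpha> $ i * \<rho> $ i = 0) \<and>
     (\<forall>i. 0 \<le> \<delta> $ i \<and> 0 \<le> \<sigma> $ i \<and> \<delta> $ i * \<sigma> $ i = 0) \<and>
     (\<forall>i\<in>idxA Q x. \<nu> $ i = 0) \<and>
     (\<forall>i\<in>idxI Q x. \<gamma> $ i = 0) \<and>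
     (\<forall>i\<in>idxB Q x. \<gamma> $ i * \<nu> $ i = 0 \<or> (\<gamma> $ i \<ge> 0 \<and> \<nu> $ i \<ge> 0)))"

definition S_stationary_point ::
  "real^'d^'m \<Rightarrow> real^'d^'m \<Rightarrow> (real^'d \<Rightarrow> real^'d) \<Rightarrow> (real^'d \<Rightarrow> real^'d^'d) \<Rightarrow>
   (real^'k \<Rightarrow> real^'m) \<Rightarrow> (real^'k \<Rightarrow> real^'k^'m) \<Rightarrow> ('d,'m,'k) pt \<Rightarrow> bool" where
  "S_stationary_point Kx Ky gradJ hessD Q JQ x =
   (\<exists>p lx ly fx fy \<rho> \<sigma> \<gamma> \<nu>. M_stationary Kx Ky gradJ hessD Q JQ x p lx ly fx fy \<rho> \<sigma> \<gamma> \<nu> \<and>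
       (\<forall>i\<in>idxB Q x. \<gamma> $ i \<ge> 0 \<and> \<nu> $ i \<ge> 0))"

definition critical_cone ::
  "real^'d^'m \<Rightarrow> real^'d^'m \<Rightarrow> (real^'d \<Rightarrow> real^'d) \<Rightarrow> (real^'d \<Rightarrow> real^'d^'d) \<Rightarrow>
   (real^'k \<Rightarrow> real^'m) \<Rightarrow> (real^'k \<Rightarrow> real^'k^'m) \<Rightarrow> ('d,'m,'k) pt \<Rightarrow> ('d,'m,'k) pt set" where
  "critical_cone Kx Ky gradJ hessD Q JQ x =
   (case x of (u, qx, qy, \<alpha>, r, \<delta>, \<theta>) \<Rightarrow>
    {(du, dqx, dqy, da, dr, dd, dt).
      gradJ u \<bullet> du \<le> 0 \<and>
      - (hessD u *v du) - transpose Kx *v dqx - transpose Ky *v dqy = 0 \<and>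
      (\<forall>i. - (Kx *v du) $ i + cos (\<theta> $ i) * dr $ i - r $ i * sin (\<theta> $ i) * dt $ i = 0) \<and>
      (\<forall>i. - (Ky *v du) $ i + sin (\<theta> $ i) * dr $ i + r $ i * cos (\<theta> $ i) * dt $ i = 0) \<and>
      (\<forall>i. dqx $ i - cos (\<theta> $ i) * dd $ i + \<delta> $ i * sin (\<theta> $ i) * dt $ i = 0) \<and>
      (\<forall>i. dqy $ i - sin (\<theta> $ i) * dd $ i - \<delta> $ i * cos (\<theta> $ i) * dt $ i = 0) \<and>
      (\<forall>i. Q \<alpha> $ i = 0 \<longrightarrow> (JQ \<alpha> *v da) $ i \<ge> 0) \<and>
      (\<forall>i. \<delta> $ i = 0 \<longrightarrow> dd $ i \<ge> 0) \<and>
      (\<forall>i\<in>idxI Q x. (JQ \<alpha> *v da) $ i = dd $ i) \<and>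
      (\<forall>i\<in>idxA Q x. dr $ i = 0) \<and>
      (\<forall>i\<in>idxB Q x. 0 \<le> (JQ \<alpha> *v da) $ i - dd $ i \<and> 0 \<le> dr $ i \<and>
                      ((JQ \<alpha> *v da) $ i - dd $ i) * dr $ i = 0)})"

definition strict_local_min ::
  "('d::finite,'m::finite,'k::finite) pt set \<Rightarrow> (real^'d \<Rightarrow> real) \<Rightarrow> ('d,'m,'k) pt \<Rightarrow> bool" where
  "strict_local_min F J x = (x \<in> F \<and> (\<exists>\<epsilon>>0. \<forall>y\<in>F. y \<noteq> x \<and> dist y x < \<epsilon> \<longrightarrow> J (fst x) < J (fst y)))"

end

theory Submission
  imports Defs
begin

text \<open>
  If \<open>x\<^sup>*\<close> were not a strict local minimizer, there would be feasible points \<open>y\<^sub>n \<noteq> x\<^sup>*\<close>,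
  \<open>y\<^sub>n \<rightarrow> x\<^sup>*\<close>, with \<open>J(u\<^sub>n) \<le> J(u\<^sup>*)\<close>, and along a subsequence \<open>(y\<^sub>n - x\<^sup>*) / |y\<^sub>n - x\<^sup>*|\<close> tends to a
  unit direction \<open>d\<close>. Linearizing the constraints along \<open>y\<^sub>n\<close> shows that \<open>d\<close> is a critical
  direction. Feasibility and strongly stationary multipliers rewrite \<open>J(u\<^sub>n) - J(u\<^sup>*)\<close> as a sum
  of second-order Taylor remainders (of \<open>J\<close>, of \<open>\<langle>\<nabla>D(\<cdot>), p\<rangle>\<close>, of the coupling of \<open>\<phi>, \<lambda>\<close> with the
  polar coordinates \<open>(r, \<delta>, \<theta>)\<close>, and of \<open>\<langle>\<rho> + \<nu>, Q(\<cdot>)\<rangle>\<close>) plus complementarity terms that are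
  eventually nonnegative. Dividing by \<open>|y\<^sub>n - x\<^sup>*|\<^sup>2\<close> shows that a second-order quantity in the
  direction \<open>d\<close> is nonpositive, whereas Young's inequality and \<open>|(\<bbbK>d\<^sub>u)\<^sub>i| \<le> \<parallel>\<bbbK>\<parallel> |d\<^sub>u|\<close> bound
  the expression of the second-order condition by that quantity.
\<close>

section \<open>Convergence along a direction\<close>

definition approaches_along :: "(nat \<Rightarrow> 'a::real_normed_vector) \<Rightarrow> 'a \<Rightarrow> (nat \<Rightarrow> real) \<Rightarrow> 'a \<Rightarrow> bool" where
  "approaches_along X x t d \<longleftrightarrow> X \<longlonglongrightarrow> x \<and> (\<forall>n. 0 < t n) \<and> (\<lambda>n. (X n - x) /\<^sub>R t n) \<longlonglongrightarrow> d"

lemma approaches_along_tendsto: "approaches_along X x t d \<Longrightarrow> X \<longlonglongrightarrow> x"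
  by (simp add: approaches_along_def)

lemma approaches_along_Pair_iff [simp]:
  "approaches_along (\<lambda>n. (X n, Y n)) (x, y) t (d, e) \<longleftrightarrow>
   approaches_along X x t d \<and> approaches_along Y y t e"
proof -
  have "(\<lambda>n. (X n, Y n)) \<longlonglongrightarrow> (x, y) \<longleftrightarrow> X \<longlonglongrightarrow> x \<and> Y \<longlonglongrightarrow> y"
    by (auto intro: tendsto_Pair dest: tendsto_fst tendsto_snd)
  moreover have "(\<lambda>n. ((X n, Y n) - (x, y)) /\<^sub>R t n) \<longlonglongrightarrow> (d, e) \<longleftrightarrow>
      (\<lambda>n. (X n - x) /\<^sub>R t n) \<longlonglongrightarrow> d \<and> (\<lambda>n. (Y n - y) /\<^sub>R t n) \<longlonglongrightarrow> e"
    by (auto intro: tendsto_Pair dest: tendsto_fst tendsto_snd)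
  ultimately show ?thesis
    unfolding approaches_along_def by blast
qed

lemma approaches_along_real_iff:
  fixes X :: "nat \<Rightarrow> real"
  shows "approaches_along X x t d \<longleftrightarrow> X \<longlonglongrightarrow> x \<and> (\<forall>n. 0 < t n) \<and> (\<lambda>n. (X n - x) / t n) \<longlonglongrightarrow> d"
  by (simp add: approaches_along_def divide_inverse_commute)

lemma approaches_along_derivative_remainder:
  assumes f: "(f has_derivative f') (at x)" and X: "approaches_along X x t d"
  shows "(\<lambda>n. (f (X n) - f x - f' (X n - x)) /\<^sub>R t n) \<longlonglongrightarrow> 0"
proof (rule LIMSEQ_I)
  fix e :: real assume "e > 0"
  have Xx: "X \<longlonglongrightarrow> x" and t: "\<And>n. 0 < t n" and D: "(\<lambda>n. (X n - x) /\<^sub>R t n) \<longlonglongrightarrow> d"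
    using X by (auto simp: approaches_along_def)
  have "norm d + 1 > 0"
    by (simp add: add_nonneg_pos)
  define e' where "e' = e / (norm d + 1)"
  have "e' > 0"
    using \<open>e > 0\<close> \<open>norm d + 1 > 0\<close> by (simp add: e'_def)
  then obtain r where "r > 0" and r: "\<And>y. norm (y - x) < r \<Longrightarrow> norm (f y - f x - f' (y - x)) \<le> e' * norm (y - x)"
    using f unfolding has_derivative_at_alt by blast
  obtain N1 where N1: "\<And>n. n \<ge> N1 \<Longrightarrow> norm (X n - x) < r"
    using LIMSEQ_D[OF Xx \<open>r > 0\<close>] by (auto simp: dist_norm)
  obtain N2 where N2: "\<And>n. n \<ge> N2 \<Longrightarrow> norm ((X n - x) /\<^sub>R t n) < norm d + 1"
    using LIMSEQ_D[OF tendsto_norm[OF D], of 1] by (force simp: dist_norm)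
  show "\<exists>N. \<forall>n\<ge>N. norm ((f (X n) - f x - f' (X n - x)) /\<^sub>R t n - 0) < e"
  proof (intro exI allI impI)
    fix n assume n: "n \<ge> max N1 N2"
    have "norm ((f (X n) - f x - f' (X n - x)) /\<^sub>R t n) \<le> e' * norm ((X n - x) /\<^sub>R t n)"
      using r[OF N1] n t[of n] by (simp add: divide_right_mono)
    also have "\<dots> < e' * (norm d + 1)"
      using N2 n \<open>e' > 0\<close> by simp
    also have "\<dots> = e"
      using \<open>norm d + 1 > 0\<close> by (simp add: e'_def)
    finally show "norm ((f (X n) - f x - f' (X n - x)) /\<^sub>R t n - 0) < e"
      by simp
  qed
qed

lemma approaches_along_has_derivative:
  assumes f: "(f has_derivative f') (at x)" and X: "approaches_along X x t d"
  shows "approaches_along (\<lambda>n. f (X n)) (f x) t (f' d)"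
proof -
  have lin: "bounded_linear f'"
    using f by (rule has_derivative_bounded_linear)
  have "(f (X n) - f x) /\<^sub>R t n = f' ((X n - x) /\<^sub>R t n) + (f (X n) - f x - f' (X n - x)) /\<^sub>R t n" for n
    using lin by (simp add: bounded_linear.linear linear_simps algebra_simps)
  moreover have "(\<lambda>n. (X n - x) /\<^sub>R t n) \<longlonglongrightarrow> d"
    using X by (simp add: approaches_along_def)
  ultimately have "(\<lambda>n. (f (X n) - f x) /\<^sub>R t n) \<longlonglongrightarrow> f' d"
    using tendsto_add[OF bounded_linear.tendsto[OF lin] approaches_along_derivative_remainder[OF f X]] by simp
  moreover have "(\<lambda>n. f (X n)) \<longlonglongrightarrow> f x"
    using isCont_tendsto_compose[OF has_derivative_continuous[OF f] approaches_along_tendsto[OF X]] .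
  ultimately show ?thesis
    using X by (simp add: approaches_along_def)
qed

lemma approaches_along_bounded_linear:
  "bounded_linear f \<Longrightarrow> approaches_along X x t d \<Longrightarrow> approaches_along (\<lambda>n. f (X n)) (f x) t (f d)"
  by (rule approaches_along_has_derivative[OF bounded_linear.has_derivative[OF _ has_derivative_ident]])

lemma approaches_along_vec_nth:
  "approaches_along X x t d \<Longrightarrow> approaches_along (\<lambda>n. X n $ i) (x $ i) t (d $ i)"
  by (rule approaches_along_bounded_linear[OF bounded_linear_vec_nth])

lemma approaches_along_matrix_vector_mult:
  fixes A :: "real^'n^'m"
  shows "approaches_along X x t d \<Longrightarrow> approaches_along (\<lambda>n. A *v X n) (A *v x) t (A *v d)"
  by (rule approaches_along_bounded_linear[where f="\<lambda>v. A *v v", OF matrix_vector_mul_bounded_linear])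

lemma approaches_along_diff:
  assumes "approaches_along X x t d" "approaches_along Y y t e"
  shows "approaches_along (\<lambda>n. X n - Y n) (x - y) t (d - e)"
  using approaches_along_bounded_linear[OF bounded_linear_sub[OF bounded_linear_fst bounded_linear_snd],
      of "\<lambda>n. (X n, Y n)" "(x, y)" t "(d, e)"] assms
  by simp

lemma approaches_along_unique:
  "approaches_along X x t d \<Longrightarrow> approaches_along X x t e \<Longrightarrow> d = e"
  unfolding approaches_along_def using LIMSEQ_unique by blast

lemma approaches_along_nonneg:
  fixes X :: "nat \<Rightarrow> real"
  assumes "approaches_along X x t d" "\<And>n. x \<le> X n"
  shows "0 \<le> d"
  using assms by (auto simp: approaches_along_real_iff intro!: LIMSEQ_le_const divide_nonneg_pos)

lemma approaches_along_nonpos: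
  fixes X :: "nat \<Rightarrow> real"
  assumes "approaches_along X x t d" "\<And>n. X n \<le> x"
  shows "d \<le> 0"
  using assms by (auto simp: approaches_along_real_iff intro!: LIMSEQ_le_const2 divide_nonpos_pos)

lemma approaches_along_eventually_const:
  assumes "approaches_along X x t d" "eventually (\<lambda>n. X n = x) sequentially"
  shows "d = 0"
proof -
  have "eventually (\<lambda>n. 0 = (X n - x) /\<^sub>R t n) sequentially"
    using assms(2) by (auto elim: eventually_mono)
  then have "(\<lambda>n. (X n - x) /\<^sub>R t n) \<longlonglongrightarrow> 0"
    by (rule Lim_transform_eventually[OF tendsto_const])
  then show ?thesis
    using assms(1) LIMSEQ_unique unfolding approaches_along_def by blast
qed

lemma approaches_along_complementarity:
  fixes a b :: "nat \<Rightarrow> real"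
  assumes "approaches_along a 0 t da" "approaches_along b 0 t db" "\<And>n. a n * b n = 0"
  shows "da * db = 0"
proof -
  have "(\<lambda>n. (a n / t n) * (b n / t n)) \<longlonglongrightarrow> da * db"
    using assms(1,2) by (intro tendsto_mult) (auto simp: approaches_along_real_iff)
  moreover have "(\<lambda>n. (a n / t n) * (b n / t n)) = (\<lambda>n. 0)"
    using assms(3) by (simp add: fun_eq_iff)
  ultimately show ?thesis
    using LIMSEQ_unique[OF tendsto_const] by metis
qed

section \<open>Second-order expansions along a sequence\<close>

lemma has_real_derivative_along_line:
  fixes f :: "'a::real_normed_vector \<Rightarrow> real"
  assumes "\<And>x. (f has_derivative f' x) (at x)"
  shows "((\<lambda>s. f (a + s *\<^sub>R v)) has_real_derivative f' (a + s *\<^sub>R v) v) (at s)"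
proof -
  have "((\<lambda>s. a + s *\<^sub>R v) has_derivative (\<lambda>s'. s' *\<^sub>R v)) (at s)"
    by (auto intro!: derivative_eq_intros)
  from has_derivative_compose[OF this assms]
  have deriv: "((\<lambda>s. f (a + s *\<^sub>R v)) has_derivative (\<lambda>s'. f' (a + s *\<^sub>R v) (s' *\<^sub>R v))) (at s)" .
  have lin: "linear (f' (a + s *\<^sub>R v))"
    using assms has_derivative_linear by blast
  show ?thesis
  proof (rule has_derivative_imp_has_field_derivative[OF deriv])
    show "s' * f' (a + s *\<^sub>R v) v = f' (a + s *\<^sub>R v) (s' *\<^sub>R v)" for s'
      by (simp add: linear_scale[OF lin])
  qed
qed

lemma taylor_second_order_lagrange:
  fixes f :: "'a::real_normed_vector \<Rightarrow> real"
  assumes d1: "\<And>x. (f has_derivative f' x) (at x)"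
    and d2: "\<And>x h. ((\<lambda>y. f' y h) has_derivative f'' x h) (at x)"
  obtains \<xi> where "0 \<le> \<xi>" "\<xi> \<le> 1" "f (x + h) = f x + f' x h + f'' (x + \<xi> *\<^sub>R h) h h / 2"
proof -
  define diff where "diff m = (if m = 0 then (\<lambda>s. f (x + s *\<^sub>R h))
     else if m = 1 then (\<lambda>s. f' (x + s *\<^sub>R h) h) else (\<lambda>s. f'' (x + s *\<^sub>R h) h h))" for m :: nat
  have "DERIV (diff m) s :> diff (Suc m) s" if "m < 2" for m s
  proof -
    have "m = 0 \<or> m = 1"
      using that by auto
    then show ?thesis
      unfolding diff_def
      using has_real_derivative_along_line[OF d1] has_real_derivative_along_line[OF d2] by auto
  qed
  then obtain \<xi> where "0 < \<xi>" "\<xi> < 1"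
    and "diff 0 1 = (\<Sum>m<2. diff m 0 / fact m * 1 ^ m) + diff 2 \<xi> / fact 2 * 1 ^ 2"
    using Maclaurin[of 1 2 diff "diff 0"] by auto
  then show ?thesis
    by (intro that[of \<xi>]) (simp_all add: diff_def numeral_2_eq_2)
qed

definition taylor_remainder :: "('a::real_normed_vector \<Rightarrow> real) \<Rightarrow> ('a \<Rightarrow> 'a \<Rightarrow> real) \<Rightarrow> 'a \<Rightarrow> 'a \<Rightarrow> real" where
  "taylor_remainder f f' x y = f y - f x - f' x (y - x)"

lemma approaches_along_second_order:
  fixes f :: "'a::real_normed_vector \<Rightarrow> real"
  assumes d1: "\<And>x. (f has_derivative f' x) (at x)"
    and d2: "\<And>x h. ((\<lambda>y. f' y h) has_derivative f'' x h) (at x)"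
    and quadratic: "\<And>y c h. f'' y (c *\<^sub>R h) (c *\<^sub>R h) = c\<^sup>2 * f'' y h h"
    and cont: "isCont (\<lambda>z. f'' (fst z) (snd z) (snd z)) (x, d)"
    and X: "approaches_along X x t d"
  shows "(\<lambda>n. taylor_remainder f f' x (X n) / (t n)\<^sup>2) \<longlonglongrightarrow> f'' x d d / 2"
proof -
  have Xx: "X \<longlonglongrightarrow> x" and t: "\<And>n. 0 < t n" and D: "(\<lambda>n. (X n - x) /\<^sub>R t n) \<longlonglongrightarrow> d"
    using X by (auto simp: approaches_along_def)
  have "\<exists>\<xi>. 0 \<le> \<xi> \<and> \<xi> \<le> 1 \<and>
      f (X n) = f x + f' x (X n - x) + f'' (x + \<xi> *\<^sub>R (X n - x)) (X n - x) (X n - x) / 2" for n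
    by (rule taylor_second_order_lagrange[OF d1 d2, of x "X n - x"]) auto
  then obtain \<xi> where \<xi>: "\<And>n. 0 \<le> \<xi> n" "\<And>n. \<xi> n \<le> 1"
    and taylor: "\<And>n. f (X n) = f x + f' x (X n - x) + f'' (x + \<xi> n *\<^sub>R (X n - x)) (X n - x) (X n - x) / 2"
    using choice[of "\<lambda>n \<xi>. 0 \<le> \<xi> \<and> \<xi> \<le> 1 \<and>
      f (X n) = f x + f' x (X n - x) + f'' (x + \<xi> *\<^sub>R (X n - x)) (X n - x) (X n - x) / 2"] by blast
  have quotient: "taylor_remainder f f' x (X n) / (t n)\<^sup>2 =
     f'' (x + \<xi> n *\<^sub>R (X n - x)) ((X n - x) /\<^sub>R t n) ((X n - x) /\<^sub>R t n) / 2" for n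
  proof -
    have "f'' y ((X n - x) /\<^sub>R t n) ((X n - x) /\<^sub>R t n) = (inverse (t n))\<^sup>2 * f'' y (X n - x) (X n - x)" for y
      using quadratic by simp
    then show ?thesis
      using taylor[of n] t[of n] by (simp add: taylor_remainder_def field_simps power2_eq_square)
  qed
  have "(\<lambda>n. \<xi> n *\<^sub>R (X n - x)) \<longlonglongrightarrow> 0"
  proof (rule tendsto_norm_zero_cancel, rule tendsto_sandwich[where f="\<lambda>n. 0"])
    show "\<forall>\<^sub>F n in sequentially. norm (\<xi> n *\<^sub>R (X n - x)) \<le> norm (X n - x)"
      using \<xi> by (auto intro!: always_eventually mult_left_le_one_le)
    show "(\<lambda>n. norm (X n - x)) \<longlonglongrightarrow> 0"
      using Xx by (simp add: tendsto_norm_zero LIM_zero)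
  qed auto
  then have "(\<lambda>n. x + \<xi> n *\<^sub>R (X n - x)) \<longlonglongrightarrow> x"
    using tendsto_add[OF tendsto_const[of x]] by fastforce
  from isCont_tendsto_compose[OF cont tendsto_Pair[OF this D]]
  show ?thesis
    unfolding quotient by (auto intro!: tendsto_divide)
qed

lemma second_difference_mean_value:
  fixes f :: "'a::real_normed_vector \<Rightarrow> real"
  assumes d1: "\<And>x. (f has_derivative f' x) (at x)"
    and d2: "\<And>x h. ((\<lambda>y. f' y h) has_derivative f'' x h) (at x)"
    and "t > 0"
  obtains z where "norm (z - x) \<le> t * (norm v + norm w)"
    "f (x + t *\<^sub>R w + t *\<^sub>R v) - f (x + t *\<^sub>R v) - f (x + t *\<^sub>R w) + f x = t\<^sup>2 * f'' z v w"
proof -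
  have "DERIV (\<lambda>s. f (x + t *\<^sub>R w + s *\<^sub>R v) - f (x + s *\<^sub>R v)) s
      :> f' (x + t *\<^sub>R w + s *\<^sub>R v) v - f' (x + s *\<^sub>R v) v" for s
    using DERIV_diff[OF has_real_derivative_along_line[OF d1] has_real_derivative_along_line[OF d1]] .
  from MVT2[OF \<open>t > 0\<close> this] obtain \<xi> where \<xi>: "0 < \<xi>" "\<xi> < t" and e1:
    "f (x + t *\<^sub>R w + t *\<^sub>R v) - f (x + t *\<^sub>R v) - (f (x + t *\<^sub>R w + 0 *\<^sub>R v) - f (x + 0 *\<^sub>R v))
      = (t - 0) * (f' (x + t *\<^sub>R w + \<xi> *\<^sub>R v) v - f' (x + \<xi> *\<^sub>R v) v)"
    by blast
  obtain \<eta> where \<eta>: "0 < \<eta>" "\<eta> < t" and e2: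
    "f' ((x + \<xi> *\<^sub>R v) + t *\<^sub>R w) v - f' ((x + \<xi> *\<^sub>R v) + 0 *\<^sub>R w) v
      = (t - 0) * f'' ((x + \<xi> *\<^sub>R v) + \<eta> *\<^sub>R w) v w"
    using MVT2[OF \<open>t > 0\<close> has_real_derivative_along_line[where f="\<lambda>y. f' y v", OF d2]] by blast
  let ?z = "(x + \<xi> *\<^sub>R v) + \<eta> *\<^sub>R w"
  have "norm (?z - x) \<le> norm (\<xi> *\<^sub>R v) + norm (\<eta> *\<^sub>R w)"
    by (metis add_diff_cancel_left' add.assoc norm_triangle_ineq)
  also have "\<dots> \<le> t * (norm v + norm w)"
    using \<xi> \<eta> by (simp add: distrib_left add_mono mult_right_mono)
  finally show ?thesis
    using e1 e2 by (intro that[of ?z]) (simp_all add: algebra_simps power2_eq_square)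
qed

lemma second_derivative_symmetric:
  fixes f :: "'a::real_normed_vector \<Rightarrow> real"
  assumes d1: "\<And>x. (f has_derivative f' x) (at x)"
    and d2: "\<And>x h. ((\<lambda>y. f' y h) has_derivative f'' x h) (at x)"
    and cont: "\<And>h k. isCont (\<lambda>y. f'' y h k) x"
  shows "f'' x v w = f'' x w v"
proof -
  define t where "t n = 1 / (real n + 1)" for n
  have t: "t n > 0" for n
    by (simp add: t_def)
  have "(\<lambda>n. t n * c) \<longlonglongrightarrow> 0" for c
    using tendsto_mult_left_zero[OF LIMSEQ_inverse_real_of_nat_add] by (simp add: t_def inverse_eq_divide add.commute)
  then have near: "z \<longlonglongrightarrow> x" if "\<And>n. norm (z n - x) \<le> t n * c" for z c
  proof -
    have "(\<lambda>n. z n - x) \<longlonglongrightarrow> 0"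
    proof (rule tendsto_norm_zero_cancel, rule tendsto_sandwich[where f="\<lambda>n. 0"])
      show "\<forall>\<^sub>F n in sequentially. norm (z n - x) \<le> t n * c"
        using that by simp
    qed (use \<open>(\<lambda>n. t n * c) \<longlonglongrightarrow> 0\<close> in auto)
    then show ?thesis
      by (simp add: LIM_zero_iff)
  qed
  have "\<exists>z. norm (z - x) \<le> t n * (norm v + norm w) \<and>
    f (x + t n *\<^sub>R w + t n *\<^sub>R v) - f (x + t n *\<^sub>R v) - f (x + t n *\<^sub>R w) + f x = (t n)\<^sup>2 * f'' z v w"
    and "\<exists>z'. norm (z' - x) \<le> t n * (norm w + norm v) \<and>
    f (x + t n *\<^sub>R v + t n *\<^sub>R w) - f (x + t n *\<^sub>R w) - f (x + t n *\<^sub>R v) + f x = (t n)\<^sup>2 * f'' z' w v" for n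
    by (blast intro: second_difference_mean_value[OF d1 d2 t])+
  then obtain z z' where z: "\<And>n. norm (z n - x) \<le> t n * (norm v + norm w)"
    "\<And>n. f (x + t n *\<^sub>R w + t n *\<^sub>R v) - f (x + t n *\<^sub>R v) - f (x + t n *\<^sub>R w) + f x = (t n)\<^sup>2 * f'' (z n) v w"
    and z': "\<And>n. norm (z' n - x) \<le> t n * (norm w + norm v)"
    "\<And>n. f (x + t n *\<^sub>R v + t n *\<^sub>R w) - f (x + t n *\<^sub>R w) - f (x + t n *\<^sub>R v) + f x = (t n)\<^sup>2 * f'' (z' n) w v"
    using choice[of "\<lambda>n z. norm (z - x) \<le> t n * (norm v + norm w) \<and>
      f (x + t n *\<^sub>R w + t n *\<^sub>R v) - f (x + t n *\<^sub>R v) - f (x + t n *\<^sub>R w) + f x = (t n)\<^sup>2 * f'' z v w"]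
      choice[of "\<lambda>n z'. norm (z' - x) \<le> t n * (norm w + norm v) \<and>
      f (x + t n *\<^sub>R v + t n *\<^sub>R w) - f (x + t n *\<^sub>R w) - f (x + t n *\<^sub>R v) + f x = (t n)\<^sup>2 * f'' z' w v"]
    by blast
  have "f'' (z n) v w = f'' (z' n) w v" for n
    using z(2)[of n] z'(2)[of n] t[of n] by (simp add: algebra_simps)
  moreover have "(\<lambda>n. f'' (z n) v w) \<longlonglongrightarrow> f'' x v w" "(\<lambda>n. f'' (z' n) w v) \<longlonglongrightarrow> f'' x w v"
    using isCont_tendsto_compose[OF cont near[OF z(1)]] isCont_tendsto_compose[OF cont near[OF z'(1)]] .
  ultimately show ?thesis
    using LIMSEQ_unique by fastforce
qed

lemma bounded_linear_matrix_vector_mult_left: "bounded_linear (\<lambda>A::real^'n^'m. A *v h)"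
  unfolding linear_conv_bounded_linear[symmetric]
  by (auto intro!: linearI simp: matrix_vector_mult_def vec_eq_iff sum.distrib algebra_simps sum_distrib_left)

lemma continuous_on_matrix_vector_mult [continuous_intros]:
  fixes A :: "'a::topological_space \<Rightarrow> real^'n^'m"
  shows "continuous_on S A \<Longrightarrow> continuous_on S v \<Longrightarrow> continuous_on S (\<lambda>z. A z *v v z)"
  unfolding matrix_vector_mult_def by (intro continuous_intros)

lemma seq_tuple7_cases:
  fixes Y :: "nat \<Rightarrow> 'a \<times> 'b \<times> 'c \<times> 'd \<times> 'e \<times> 'f \<times> 'g"
  obtains u qx qy al r dl th where "Y = (\<lambda>n. (u n, qx n, qy n, al n, r n, dl n, th n))"
  by (rule that[of "\<lambda>n. fst (Y n)" "\<lambda>n. fst (snd (Y n))" "\<lambda>n. fst (snd (snd (Y n)))"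
        "\<lambda>n. fst (snd (snd (snd (Y n))))" "\<lambda>n. fst (snd (snd (snd (snd (Y n)))))"
        "\<lambda>n. fst (snd (snd (snd (snd (snd (Y n))))))" "\<lambda>n. snd (snd (snd (snd (snd (snd (Y n))))))"]) simp

lemma not_strict_minimum_imp_approaching_sequence:
  fixes x :: "'a::euclidean_space" and f :: "'a \<Rightarrow> 'b::linorder"
  assumes "\<not> (\<exists>\<epsilon>>0. \<forall>y\<in>F. y \<noteq> x \<and> dist y x < \<epsilon> \<longrightarrow> f x < f y)"
  obtains Y d where "\<And>n. Y n \<in> F" "\<And>n. f (Y n) \<le> f x" "approaches_along Y x (\<lambda>n. norm (Y n - x)) d" "d \<noteq> 0"
proof -
  have "\<exists>y. y \<in> F \<and> y \<noteq> x \<and> dist y x < 1 / (real n + 1) \<and> f y \<le> f x" for n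
  proof -
    have "1 / (real n + 1) > 0"
      by simp
    then obtain y where "y \<in> F" "y \<noteq> x" "dist y x < 1 / (real n + 1)" "\<not> f x < f y"
      using assms by blast
    then show ?thesis
      by (auto simp: not_less)
  qed
  then obtain y where y: "\<And>n. y n \<in> F" "\<And>n. y n \<noteq> x" "\<And>n. dist (y n) x < 1 / (real n + 1)"
    "\<And>n. f (y n) \<le> f x"
    using choice[of "\<lambda>n y. y \<in> F \<and> y \<noteq> x \<and> dist y x < 1 / (real n + 1) \<and> f y \<le> f x"] by blast
  have "(\<lambda>n. dist (y n) x) \<longlonglongrightarrow> 0"
  proof (rule tendsto_sandwich[where f="\<lambda>n. 0"])
    show "\<forall>\<^sub>F n in sequentially. dist (y n) x \<le> 1 / (real n + 1)"
      using y(3) by (simp add: less_imp_le)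
    show "(\<lambda>n. 1 / (real n + 1)) \<longlonglongrightarrow> 0"
      using LIMSEQ_inverse_real_of_nat by (simp add: inverse_eq_divide add.commute)
  qed auto
  then have "y \<longlonglongrightarrow> x"
    using tendsto_dist_iff by blast
  have "(y n - x) /\<^sub>R norm (y n - x) \<in> sphere 0 1" for n
    using y(2)[of n] by simp
  then obtain d \<sigma> where d: "d \<in> sphere 0 1" and \<sigma>: "strict_mono \<sigma>"
    and lim: "((\<lambda>n. (y n - x) /\<^sub>R norm (y n - x)) \<circ> \<sigma>) \<longlonglongrightarrow> d"
    using compact_sphere[THEN compact_imp_seq_compact] unfolding seq_compact_def by (metis (no_types, lifting))
  show ?thesis
  proof (rule that[of "y \<circ> \<sigma>" d])
    show "approaches_along (y \<circ> \<sigma>) x (\<lambda>n. norm ((y \<circ> \<sigma>) n - x)) d"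
      unfolding approaches_along_def
      using LIMSEQ_subseq_LIMSEQ[OF \<open>y \<longlonglongrightarrow> x\<close> \<sigma>] lim y(2) by (simp add: o_def)
  qed (use y d in auto)
qed

section \<open>Polar coordinates\<close>

lemma approaches_along_polar:
  fixes r \<theta> :: "nat \<Rightarrow> real"
  assumes r: "approaches_along r r0 t dr" and \<theta>: "approaches_along \<theta> \<theta>0 t d\<theta>"
  shows "approaches_along (\<lambda>n. r n * cos (\<theta> n)) (r0 * cos \<theta>0) t (cos \<theta>0 * dr - r0 * sin \<theta>0 * d\<theta>)"
    and "approaches_along (\<lambda>n. r n * sin (\<theta> n)) (r0 * sin \<theta>0) t (sin \<theta>0 * dr + r0 * cos \<theta>0 * d\<theta>)"
proof -
  have pair: "approaches_along (\<lambda>n. (r n, \<theta> n)) (r0, \<theta>0) t (dr, d\<theta>)"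
    using r \<theta> by simp
  have "((\<lambda>z. fst z * cos (snd z)) has_derivative (\<lambda>h. cos \<theta>0 * fst h - r0 * sin \<theta>0 * snd h)) (at (r0, \<theta>0))"
    and "((\<lambda>z. fst z * sin (snd z)) has_derivative (\<lambda>h. sin \<theta>0 * fst h + r0 * cos \<theta>0 * snd h)) (at (r0, \<theta>0))"
    by (auto intro!: derivative_eq_intros simp: algebra_simps)
  from this[THEN approaches_along_has_derivative[OF _ pair]]
  show "approaches_along (\<lambda>n. r n * cos (\<theta> n)) (r0 * cos \<theta>0) t (cos \<theta>0 * dr - r0 * sin \<theta>0 * d\<theta>)"
    and "approaches_along (\<lambda>n. r n * sin (\<theta> n)) (r0 * sin \<theta>0) t (sin \<theta>0 * dr + r0 * cos \<theta>0 * d\<theta>)"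
    by simp_all
qed

lemma rotated_component_sq_le:
  fixes a b x :: real
  shows "(a * cos x + b * sin x)\<^sup>2 \<le> a\<^sup>2 + b\<^sup>2"
proof -
  have "(a * cos x + b * sin x)\<^sup>2 + (b * cos x - a * sin x)\<^sup>2 = a\<^sup>2 + b\<^sup>2"
    using sin_cos_squared_add[of x] by algebra
  then show ?thesis
    by (metis le_add_same_cancel1 zero_le_power2)
qed

text \<open>For \<open>z = (r, \<delta>, \<theta>)\<close>, \<open>(a, b) = \<phi>\<^sub>i\<close> and \<open>(c, e) = \<lambda>\<^sub>i\<close> this is the \<open>i\<close>-th summand of
  \<open>\<langle>\<phi>, \<bbbK>u\<rangle> - \<langle>\<lambda>, q\<rangle>\<close> once \<open>(\<bbbK>u)\<^sub>i = r (cos \<theta>, sin \<theta>)\<close> and \<open>q\<^sub>i = \<delta> (cos \<theta>, sin \<theta>)\<close> are substituted.\<close>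

definition polar_pairing :: "real \<Rightarrow> real \<Rightarrow> real \<Rightarrow> real \<Rightarrow> real \<times> real \<times> real \<Rightarrow> real" where
  "polar_pairing a b c e = (\<lambda>(r, \<delta>, \<theta>). r * (a * cos \<theta> + b * sin \<theta>) - \<delta> * (c * cos \<theta> + e * sin \<theta>))"

definition polar_pairing_deriv :: "real \<Rightarrow> real \<Rightarrow> real \<Rightarrow> real \<Rightarrow> real \<times> real \<times> real \<Rightarrow> real \<times> real \<times> real \<Rightarrow> real" where
  "polar_pairing_deriv a b c e = (\<lambda>(r, \<delta>, \<theta>) (hr, h\<delta>, h\<theta>).
     hr * (a * cos \<theta> + b * sin \<theta>) - h\<delta> * (c * cos \<theta> + e * sin \<theta>)
     + h\<theta> * (r * (b * cos \<theta> - a * sin \<theta>) - \<delta> * (e * cos \<theta> - c * sin \<theta>)))"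

definition polar_pairing_deriv2 ::
  "real \<Rightarrow> real \<Rightarrow> real \<Rightarrow> real \<Rightarrow> real \<times> real \<times> real \<Rightarrow> real \<times> real \<times> real \<Rightarrow> real \<times> real \<times> real \<Rightarrow> real" where
  "polar_pairing_deriv2 a b c e = (\<lambda>(r, \<delta>, \<theta>) (hr, h\<delta>, h\<theta>) (kr, k\<delta>, k\<theta>).
     hr * k\<theta> * (b * cos \<theta> - a * sin \<theta>) - h\<delta> * k\<theta> * (e * cos \<theta> - c * sin \<theta>)
     + h\<theta> * (kr * (b * cos \<theta> - a * sin \<theta>) - k\<delta> * (e * cos \<theta> - c * sin \<theta>)
             - k\<theta> * (r * (a * cos \<theta> + b * sin \<theta>) - \<delta> * (c * cos \<theta> + e * sin \<theta>))))"

lemma has_derivative_polar_pairing: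
  "(polar_pairing a b c e has_derivative polar_pairing_deriv a b c e z) (at z)"
  unfolding polar_pairing_def polar_pairing_deriv_def case_prod_beta
  by (auto intro!: derivative_eq_intros simp: algebra_simps)

lemma has_derivative_polar_pairing_deriv:
  "((\<lambda>y. polar_pairing_deriv a b c e y h) has_derivative polar_pairing_deriv2 a b c e z h) (at z)"
  unfolding polar_pairing_deriv_def polar_pairing_deriv2_def case_prod_beta
  by (auto intro!: derivative_eq_intros simp: algebra_simps)

lemma approaches_along_polar_pairing_second_order:
  assumes "approaches_along Z z t h"
  shows "(\<lambda>n. taylor_remainder (polar_pairing a b c e) (polar_pairing_deriv a b c e) z (Z n) / (t n)\<^sup>2)
     \<longlonglongrightarrow> polar_pairing_deriv2 a b c e z h h / 2"
proof (rule approaches_along_second_order[OF has_derivative_polar_pairing has_derivative_polar_pairing_deriv _ _ assms])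
  show "polar_pairing_deriv2 a b c e y (s *\<^sub>R k) (s *\<^sub>R k) = s\<^sup>2 * polar_pairing_deriv2 a b c e y k k" for y s k
    unfolding polar_pairing_deriv2_def case_prod_beta by (simp add: algebra_simps power2_eq_square)
  show "isCont (\<lambda>w. polar_pairing_deriv2 a b c e (fst w) (snd w) (snd w)) (z, h)"
    unfolding polar_pairing_deriv2_def case_prod_beta by (intro continuous_intros)
qed

section \<open>The critical cone and the second-order form\<close>

lemma component_sq_le_opnormK:
  fixes Kx Ky :: "real^'d^'m"
  shows "((Kx *v v) $ i)\<^sup>2 + ((Ky *v v) $ i)\<^sup>2 \<le> (opnormK Kx Ky)\<^sup>2 * (norm v)\<^sup>2"
proof -
  have "((Kx *v v) $ i)\<^sup>2 + ((Ky *v v) $ i)\<^sup>2 \<le> (norm (Kx *v v))\<^sup>2 + (norm (Ky *v v))\<^sup>2"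
    using power_mono[OF component_le_norm_cart[of "Kx *v v" i] abs_ge_zero, of 2]
      power_mono[OF component_le_norm_cart[of "Ky *v v" i] abs_ge_zero, of 2]
    by simp
  also have "\<dots> = (norm (Kx *v v, Ky *v v))\<^sup>2"
    by (simp add: norm_Pair)
  also have "\<dots> \<le> (opnormK Kx Ky * norm v)\<^sup>2"
  proof (rule power_mono)
    have "bounded_linear (\<lambda>u. (Kx *v u, Ky *v u))"
      by (intro bounded_linear_Pair matrix_vector_mul_bounded_linear)
    then show "norm (Kx *v v, Ky *v v) \<le> opnormK Kx Ky * norm v"
      unfolding opnormK_def using onorm by fastforce
  qed simp
  finally show ?thesis
    by (simp add: power_mult_distrib)
qed

lemma critical_cone_radial_sq_le:
  assumes "(du, dqx, dqy, da, dr, dd, dt) \<in> critical_cone Kx Ky gradJ hessD Q JQ (u, qx, qy, \<alpha>, r, \<delta>, \<theta>)"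
  shows "(dr $ i)\<^sup>2 \<le> (opnormK Kx Ky)\<^sup>2 * (norm du)\<^sup>2"
proof -
  have "(Kx *v du) $ i = cos (\<theta> $ i) * dr $ i - r $ i * sin (\<theta> $ i) * dt $ i"
    and "(Ky *v du) $ i = sin (\<theta> $ i) * dr $ i + r $ i * cos (\<theta> $ i) * dt $ i"
    using assms unfolding critical_cone_def by (auto simp: algebra_simps)
  then have "dr $ i = (Kx *v du) $ i * cos (\<theta> $ i) + (Ky *v du) $ i * sin (\<theta> $ i)"
    using sin_cos_squared_add[of "\<theta> $ i"] by algebra
  then have "(dr $ i)\<^sup>2 \<le> ((Kx *v du) $ i)\<^sup>2 + ((Ky *v du) $ i)\<^sup>2"
    by (simp only: rotated_component_sq_le)
  also have "\<dots> \<le> (opnormK Kx Ky)\<^sup>2 * (norm du)\<^sup>2"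
    by (rule component_sq_le_opnormK)
  finally show ?thesis .
qed

lemma sum_mult_le_sum_mult_sum:
  fixes f g :: "'a \<Rightarrow> real"
  assumes "finite S" "\<And>i. i \<in> S \<Longrightarrow> 0 \<le> f i" "\<And>i. i \<in> S \<Longrightarrow> 0 \<le> g i"
  shows "(\<Sum>i\<in>S. f i * g i) \<le> (\<Sum>i\<in>S. f i) * (\<Sum>i\<in>S. g i)"
proof -
  have "(\<Sum>i\<in>S. f i * g i) \<le> (\<Sum>i\<in>S. f i * (\<Sum>j\<in>S. g j))"
    using assms by (intro sum_mono mult_left_mono member_le_sum) auto
  then show ?thesis
    by (simp add: sum_distrib_right)
qed

lemma feasible_index_partition:
  assumes "feasible_TV Kx Ky gradD Q x"
  shows "idxI Q x \<union> idxB Q x \<union> idxA Q x = UNIV" "idxI Q x \<inter> idxB Q x = {}"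
    "(idxI Q x \<union> idxB Q x) \<inter> idxA Q x = {}"
proof -
  obtain u qx qy \<alpha> r \<delta> \<theta> where x: "x = (u, qx, qy, \<alpha>, r, \<delta>, \<theta>)"
    using prod_cases7 by blast
  have "0 \<le> r $ i \<and> \<delta> $ i \<le> Q \<alpha> $ i \<and> r $ i * (Q \<alpha> $ i - \<delta> $ i) = 0" for i
    using assms unfolding x feasible_TV_def by auto
  then show "idxI Q x \<union> idxB Q x \<union> idxA Q x = UNIV" "idxI Q x \<inter> idxB Q x = {}"
    "(idxI Q x \<union> idxB Q x) \<inter> idxA Q x = {}"
    unfolding x by (fastforce simp: idxI_def idxB_def idxA_def)+
qed

definition sosc_form ::
  "real^'d^'m \<Rightarrow> real^'d^'m \<Rightarrow> (real^'d \<Rightarrow> real^'d \<Rightarrow> real^'d^'d) \<Rightarrow> (real^'d \<Rightarrow> real^'d^'d) \<Rightarrow>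
   (real^'k \<Rightarrow> real^'m) \<Rightarrow> (real^'k \<Rightarrow> real^'k^'m) \<Rightarrow> (real^'k \<Rightarrow> 'm \<Rightarrow> real^'k^'k) \<Rightarrow> ('d,'m,'k) pt \<Rightarrow>
   real^'d \<Rightarrow> real^'m \<Rightarrow> real^'m \<Rightarrow> real^'m \<Rightarrow> real^'m \<Rightarrow> ('d,'m,'k) pt \<Rightarrow> real" where
  "sosc_form Kx Ky D3 hessJ Q JQ HQ x p fx fy \<rho> \<nu> d =
    (case x of (u, qx, qy, \<alpha>, r, \<delta>, \<theta>) \<Rightarrow> case d of (du, dqx, dqy, da, dr, dd, dt) \<Rightarrow>
      (hessJ u *v du) \<bullet> du
      - (D3 u p *v du) \<bullet> du
      - (\<Sum>i\<in>idxI Q x \<union> idxB Q x. (fx $ i)\<^sup>2 + (fy $ i)\<^sup>2) * (opnormK Kx Ky)\<^sup>2 * (norm du)\<^sup>2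
      - (\<Sum>i\<in>UNIV. (\<rho> $ i + \<nu> $ i) * (da \<bullet> (HQ \<alpha> i *v da)))
      - (\<Sum>i\<in>idxI Q x. ((Kx *v p) $ i)\<^sup>2 + ((Ky *v p) $ i)\<^sup>2) * (\<Sum>i\<in>idxI Q x. ((JQ \<alpha> *v da) $ i)\<^sup>2)
      + (\<Sum>i\<in>idxI Q x. (\<delta> $ i * \<nu> $ i - 2) * (dt $ i)\<^sup>2)
      + (\<Sum>i\<in>idxB Q x. (\<delta> $ i * \<nu> $ i - 1) * (dt $ i)\<^sup>2))"

lemma theta_axis_in_critical_cone:
  assumes "r $ i = 0" "\<delta> $ i = 0"
  shows "(0, 0, 0, 0, 0, 0, axis i 1) \<in> critical_cone Kx Ky gradJ hessD Q JQ (u, qx, qy, \<alpha>, r, \<delta>, \<theta>)"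
  using assms by (auto simp: critical_cone_def axis_def)

lemma sosc_form_theta_axis:
  fixes x :: "('d::finite, 'm::finite, 'k::finite) pt"
  assumes "i \<notin> idxI Q x" "i \<notin> idxB Q x"
  shows "sosc_form Kx Ky D3 hessJ Q JQ HQ x p fx fy \<rho> \<nu> (0, 0, 0, 0, 0, 0, axis i 1) = 0"
proof -
  have "(\<Sum>j\<in>idxI Q x. c j * ((axis i 1 :: real^'m) $ j)\<^sup>2) = 0"
    and "(\<Sum>j\<in>idxB Q x. c j * ((axis i 1 :: real^'m) $ j)\<^sup>2) = 0" for c
    using assms by (auto intro!: sum.neutral simp: axis_def)
  then show ?thesis
    by (simp add: sosc_form_def split: prod.split)
qed

text \<open>A pure \<open>\<theta>\<^sub>i\<close>-perturbation is critical when \<open>r\<^sub>i = \<delta>\<^sub>i = 0\<close>, so the second-order condition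
  forces \<open>\<delta>\<^sub>i > 0\<close> wherever \<open>r\<^sub>i = 0\<close>.\<close>

lemma delta_pos_if_sosc:
  fixes u :: "real^'d" and \<alpha> :: "real^'k" and r \<delta> :: "real^'m"
  assumes feasible: "feasible_TV Kx Ky gradD Q (u, qx, qy, \<alpha>, r, \<delta>, \<theta>)"
    and B_cap: "idxB Q (u, qx, qy, \<alpha>, r, \<delta>, \<theta>) \<inter> {i. Q \<alpha> $ i = 0} = {}"
    and sosc: "\<And>d. d \<in> critical_cone Kx Ky gradJ hessD Q JQ (u, qx, qy, \<alpha>, r, \<delta>, \<theta>) \<Longrightarrow> d \<noteq> 0 \<Longrightarrow>
      0 < sosc_form Kx Ky D3 hessJ Q JQ HQ (u, qx, qy, \<alpha>, r, \<delta>, \<theta>) p fx fy \<rho> \<nu> d"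
    and "r $ i = 0"
  shows "0 < \<delta> $ i"
proof (rule ccontr)
  assume "\<not> 0 < \<delta> $ i"
  moreover have "0 \<le> \<delta> $ i" "\<delta> $ i \<le> Q \<alpha> $ i"
    using feasible by (simp_all add: feasible_TV_def)
  ultimately have "\<delta> $ i = 0"
    by simp
  moreover have "Q \<alpha> $ i \<noteq> 0"
  proof
    assume "Q \<alpha> $ i = 0"
    then have "i \<in> idxB Q (u, qx, qy, \<alpha>, r, \<delta>, \<theta>) \<inter> {i. Q \<alpha> $ i = 0}"
      using \<open>r $ i = 0\<close> \<open>\<delta> $ i = 0\<close> by (simp add: idxB_def)
    with B_cap show False
      by blast
  qed
  ultimately have "i \<notin> idxI Q (u, qx, qy, \<alpha>, r, \<delta>, \<theta>)" "i \<notin> idxB Q (u, qx, qy, \<alpha>, r, \<delta>, \<theta>)"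
    using \<open>r $ i = 0\<close> by (simp_all add: idxI_def idxB_def)
  moreover have "(0, 0, 0, 0, 0, 0, axis i 1) \<noteq> (0 :: ('d, 'm, 'k) pt)"
    by (simp add: zero_prod_def axis_eq_0_iff)
  ultimately show False
    using sosc[OF theta_axis_in_critical_cone] sosc_form_theta_axis \<open>r $ i = 0\<close> \<open>\<delta> $ i = 0\<close>
    by (metis less_irrefl)
qed

section \<open>The problem near a feasible point\<close>

locale TV_problem =
  fixes Kx Ky :: "real^'d^'m"
    and D :: "real^'d \<Rightarrow> real" and gradD :: "real^'d \<Rightarrow> real^'d"
    and hessD :: "real^'d \<Rightarrow> real^'d^'d" and D3 :: "real^'d \<Rightarrow> real^'d \<Rightarrow> real^'d^'d"
    and J :: "real^'d \<Rightarrow> real" and gradJ :: "real^'d \<Rightarrow> real^'d" and hessJ :: "real^'d \<Rightarrow> real^'d^'d"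
    and Q :: "real^'k \<Rightarrow> real^'m" and JQ :: "real^'k \<Rightarrow> real^'k^'m"
    and HQ :: "real^'k \<Rightarrow> 'm \<Rightarrow> real^'k^'k"
  assumes D_d1: "\<And>u. (D has_derivative (\<lambda>h. gradD u \<bullet> h)) (at u)"
    and D_d2: "\<And>u. (gradD has_derivative (\<lambda>h. hessD u *v h)) (at u)"
    and D_d3: "\<And>u. (hessD has_derivative D3 u) (at u)"
    and D_C3: "\<And>h. continuous_on UNIV (\<lambda>u. D3 u h)"
    and J_d1: "\<And>u. (J has_derivative (\<lambda>h. gradJ u \<bullet> h)) (at u)"
    and J_d2: "\<And>u. (gradJ has_derivative (\<lambda>h. hessJ u *v h)) (at u)"
    and J_C2: "continuous_on UNIV hessJ"
    and Q_d1: "\<And>a. (Q has_derivative (\<lambda>h. JQ a *v h)) (at a)"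
    and Q_d2: "\<And>a i. ((\<lambda>b. JQ b $ i) has_derivative (\<lambda>h. HQ a i *v h)) (at a)"
    and Q_C2: "\<And>i. continuous_on UNIV (\<lambda>a. HQ a i)"
begin

lemma has_derivative_hessD_apply: "((\<lambda>y. hessD y *v h) has_derivative (\<lambda>k. D3 u k *v h)) (at u)"
  by (rule bounded_linear.has_derivative[OF bounded_linear_matrix_vector_mult_left D_d3])

lemma continuous_on_hessD: "continuous_on UNIV hessD"
  using has_derivative_continuous[OF D_d3] by (simp add: continuous_at_imp_continuous_on)

lemma linear_D3: "linear (D3 u)"
  using D_d3 has_derivative_linear by blast

lemma continuous_on_D3: "continuous_on UNIV (\<lambda>z. D3 (fst z) (snd z))"
proof -
  have "D3 u h = (\<Sum>j\<in>UNIV. h $ j *\<^sub>R D3 u (axis j 1))" for u h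
  proof -
    have "D3 u h = D3 u (\<Sum>j\<in>UNIV. h $ j *\<^sub>R axis j 1)"
      using basis_expansion[of h] by (simp add: scalar_mult_eq_scaleR)
    then show ?thesis
      by (simp add: linear_sum[OF linear_D3] linear_scale[OF linear_D3])
  qed
  then have "(\<lambda>z. D3 (fst z) (snd z)) = (\<lambda>z. \<Sum>j\<in>UNIV. snd z $ j *\<^sub>R D3 (fst z) (axis j 1))"
    by blast
  moreover have "continuous_on UNIV (\<lambda>z. D3 (fst z) (axis j 1))" for j
    using continuous_on_compose2[OF D_C3 continuous_on_fst[OF continuous_on_id]] by simp
  ultimately show ?thesis
    by (simp only:) (intro continuous_intros)
qed

lemma has_derivative_weighted_JQ:
  "((\<lambda>y. c \<bullet> (JQ y *v h)) has_derivative (\<lambda>k. \<Sum>i\<in>UNIV. c $ i * ((HQ x i *v k) \<bullet> h))) (at x)"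
proof -
  have "(\<lambda>y. c \<bullet> (JQ y *v h)) = (\<lambda>y. \<Sum>i\<in>UNIV. c $ i * (JQ y $ i \<bullet> h))"
    by (simp add: inner_vec_def matrix_vector_mult_def)
  then show ?thesis
    by (simp only:) (intro has_derivative_sum has_derivative_mult_right has_derivative_inner_left[OF Q_d2])
qed

lemma hessD_symmetric: "(hessD u *v k) \<bullet> h = (hessD u *v h) \<bullet> k"
proof (rule second_derivative_symmetric[where f'="\<lambda>x h. gradD x \<bullet> h" and f''="\<lambda>x h k. (hessD x *v k) \<bullet> h"])
  show "isCont (\<lambda>y. (hessD y *v k) \<bullet> h) u" for h k
  proof -
    have "continuous_on UNIV (\<lambda>y. (hessD y *v k) \<bullet> h)"
      by (intro continuous_intros continuous_on_hessD)
    then show ?thesis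
      by (simp add: continuous_on_eq_continuous_at)
  qed
qed (auto intro!: D_d1 has_derivative_inner_left[OF D_d2])

lemma D3_symmetric:
  shows D3_symmetric_12: "(D3 u a *v b) \<bullet> c = (D3 u b *v a) \<bullet> c"
    and D3_symmetric_23: "(D3 u a *v b) \<bullet> c = (D3 u a *v c) \<bullet> b"
proof -
  show "(D3 u a *v b) \<bullet> c = (D3 u b *v a) \<bullet> c"
  proof (rule second_derivative_symmetric[where f="\<lambda>u. gradD u \<bullet> c"
        and f'="\<lambda>x h. (hessD x *v h) \<bullet> c" and f''="\<lambda>x h k. (D3 x k *v h) \<bullet> c"])
    show "isCont (\<lambda>y. (D3 y k *v h) \<bullet> c) u" for h k
    proof -
      have "continuous_on UNIV (\<lambda>y. (D3 y k *v h) \<bullet> c)"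
        by (intro continuous_intros D_C3)
      then show ?thesis
        by (simp add: continuous_on_eq_continuous_at)
    qed
  qed (auto intro!: has_derivative_inner_left[OF D_d2] has_derivative_inner_left[OF has_derivative_hessD_apply])
  have "((\<lambda>y. (hessD y *v b) \<bullet> c) has_derivative (\<lambda>k. (D3 u k *v b) \<bullet> c)) (at u)"
    and "((\<lambda>y. (hessD y *v c) \<bullet> b) has_derivative (\<lambda>k. (D3 u k *v c) \<bullet> b)) (at u)"
    by (rule has_derivative_inner_left[OF has_derivative_hessD_apply])+
  then show "(D3 u a *v b) \<bullet> c = (D3 u a *v c) \<bullet> b"
    unfolding hessD_symmetric[of _ c b] by (metis has_derivative_unique)
qed

context
  fixes u0 :: "real^'d" and qx0 qy0 :: "real^'m" and a0 :: "real^'k" and r0 dl0 th0 :: "real^'m"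
  assumes feasible0: "feasible_TV Kx Ky gradD Q (u0, qx0, qy0, a0, r0, dl0, th0)"
begin

abbreviation (input) "x0 \<equiv> (u0, qx0, qy0, a0, r0, dl0, th0)"

lemma lagrangian_expansion:
  assumes M: "M_stationary Kx Ky gradJ hessD Q JQ x0 p lx ly fx fy \<rho> \<sigma> \<gamma> \<nu>"
    and feasible: "feasible_TV Kx Ky gradD Q (u, qx, qy, \<alpha>, r, \<delta>, \<theta>)"
  shows "J u - J u0 = (J u - J u0 - gradJ u0 \<bullet> (u - u0))
      - (gradD u \<bullet> p - gradD u0 \<bullet> p - (hessD u0 *v (u - u0)) \<bullet> p)
      + (\<Sum>i\<in>UNIV. polar_pairing (fx $ i) (fy $ i) (lx $ i) (ly $ i) (r $ i, \<delta> $ i, \<theta> $ i)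
                  - polar_pairing (fx $ i) (fy $ i) (lx $ i) (ly $ i) (r0 $ i, dl0 $ i, th0 $ i))"
proof -
  have gradJ: "gradJ u0 = hessD u0 *v p + transpose Kx *v fx + transpose Ky *v fy"
    and lx: "lx = Kx *v p" and ly: "ly = Ky *v p"
    using M unfolding M_stationary_def by (simp_all add: algebra_simps)
  have gradD_p: "gradD v \<bullet> p = - (qx' \<bullet> lx + qy' \<bullet> ly)"
    if "gradD v + transpose Kx *v qx' + transpose Ky *v qy' = 0" for v qx' qy'
  proof -
    have "gradD v = - (transpose Kx *v qx' + transpose Ky *v qy')"
      using that by (metis add.assoc eq_neg_iff_add_eq_0)
    then show ?thesis
      by (simp add: inner_add_left inner_diff_left dot_lmul_matrix lx ly)
  qed
  have "gradJ u0 \<bullet> (u - u0) = (hessD u0 *v (u - u0)) \<bullet> p + fx \<bullet> (Kx *v u - Kx *v u0) + fy \<bullet> (Ky *v u - Ky *v u0)"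
    unfolding gradJ using hessD_symmetric[of u0 p "u - u0"]
    by (simp add: inner_add_left dot_lmul_matrix matrix_vector_mult_diff_distrib)
  moreover have "gradD u \<bullet> p = - (qx \<bullet> lx + qy \<bullet> ly)" "gradD u0 \<bullet> p = - (qx0 \<bullet> lx + qy0 \<bullet> ly)"
    using gradD_p feasible feasible0 unfolding feasible_TV_def by simp_all
  ultimately have "J u - J u0 = (J u - J u0 - gradJ u0 \<bullet> (u - u0))
      - (gradD u \<bullet> p - gradD u0 \<bullet> p - (hessD u0 *v (u - u0)) \<bullet> p)
      + (fx \<bullet> (Kx *v u - Kx *v u0) + fy \<bullet> (Ky *v u - Ky *v u0) - lx \<bullet> (qx - qx0) - ly \<bullet> (qy - qy0))"
    by (simp add: algebra_simps inner_diff_left inner_diff_right inner_commute)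
  moreover have "polar_pairing (fx $ i) (fy $ i) (lx $ i) (ly $ i) (r $ i, \<delta> $ i, \<theta> $ i)
      - polar_pairing (fx $ i) (fy $ i) (lx $ i) (ly $ i) (r0 $ i, dl0 $ i, th0 $ i)
      = fx $ i * ((Kx *v u) $ i - (Kx *v u0) $ i) + fy $ i * ((Ky *v u) $ i - (Ky *v u0) $ i)
        - lx $ i * (qx $ i - qx0 $ i) - ly $ i * (qy $ i - qy0 $ i)" for i
    using feasible feasible0 unfolding feasible_TV_def by (simp add: polar_pairing_def algebra_simps)
  then have "fx \<bullet> (Kx *v u - Kx *v u0) + fy \<bullet> (Ky *v u - Ky *v u0) - lx \<bullet> (qx - qx0) - ly \<bullet> (qy - qy0)
      = (\<Sum>i\<in>UNIV. polar_pairing (fx $ i) (fy $ i) (lx $ i) (ly $ i) (r $ i, \<delta> $ i, \<theta> $ i)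
                  - polar_pairing (fx $ i) (fy $ i) (lx $ i) (ly $ i) (r0 $ i, dl0 $ i, th0 $ i))"
    by (simp add: inner_vec_def sum.distrib sum_subtractf)
  ultimately show ?thesis
    by simp
qed

lemma polar_stationarity:
  assumes "M_stationary Kx Ky gradJ hessD Q JQ x0 p lx ly fx fy \<rho> \<sigma> \<gamma> \<nu>"
  shows "fx $ i * cos (th0 $ i) + fy $ i * sin (th0 $ i) = \<gamma> $ i"
    and "lx $ i * cos (th0 $ i) + ly $ i * sin (th0 $ i) = \<nu> $ i - \<sigma> $ i"
    and "r0 $ i * (fy $ i * cos (th0 $ i) - fx $ i * sin (th0 $ i))
      - dl0 $ i * (ly $ i * cos (th0 $ i) - lx $ i * sin (th0 $ i)) = 0"
proof -
  have "cos (th0 $ i) * fx $ i + sin (th0 $ i) * fy $ i - \<gamma> $ i = 0"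
    and "- cos (th0 $ i) * lx $ i - sin (th0 $ i) * ly $ i - \<sigma> $ i + \<nu> $ i = 0"
    and "sin (th0 $ i) * (- r0 $ i * fx $ i + dl0 $ i * lx $ i) - cos (th0 $ i) * (- r0 $ i * fy $ i + dl0 $ i * ly $ i) = 0"
    using assms unfolding M_stationary_def prod.case by blast+
  then show "fx $ i * cos (th0 $ i) + fy $ i * sin (th0 $ i) = \<gamma> $ i"
    and "lx $ i * cos (th0 $ i) + ly $ i * sin (th0 $ i) = \<nu> $ i - \<sigma> $ i"
    and "r0 $ i * (fy $ i * cos (th0 $ i) - fx $ i * sin (th0 $ i))
      - dl0 $ i * (ly $ i * cos (th0 $ i) - lx $ i * sin (th0 $ i)) = 0"
    by (simp_all add: algebra_simps)
qed

lemma polar_pairing_deriv_at_stationary_point: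
  assumes "M_stationary Kx Ky gradJ hessD Q JQ x0 p lx ly fx fy \<rho> \<sigma> \<gamma> \<nu>"
  shows "polar_pairing_deriv (fx $ i) (fy $ i) (lx $ i) (ly $ i) (r0 $ i, dl0 $ i, th0 $ i) (a, b, c)
    = a * \<gamma> $ i - b * (\<nu> $ i - \<sigma> $ i)"
  unfolding polar_pairing_deriv_def prod.case polar_stationarity[OF assms] by simp

lemma complementarity_increment_nonneg:
  assumes M: "M_stationary Kx Ky gradJ hessD Q JQ x0 p lx ly fx fy \<rho> \<sigma> \<gamma> \<nu>"
    and S: "\<forall>i\<in>idxB Q x0. 0 \<le> \<gamma> $ i \<and> 0 \<le> \<nu> $ i"
    and feasible: "feasible_TV Kx Ky gradD Q (u, qx, qy, \<alpha>, r, \<delta>, \<theta>)"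
    and inactive: "r0 $ i = 0 \<Longrightarrow> dl0 $ i < Q a0 $ i \<Longrightarrow> r $ i = 0"
    and active: "0 < r0 $ i \<Longrightarrow> Q \<alpha> $ i = \<delta> $ i"
  shows "0 \<le> (r $ i - r0 $ i) * \<gamma> $ i + \<nu> $ i * ((Q \<alpha> $ i - \<delta> $ i) - (Q a0 $ i - dl0 $ i))"
proof -
  have feasible_i: "0 \<le> r $ i" "\<delta> $ i \<le> Q \<alpha> $ i"
    using feasible unfolding feasible_TV_def by auto
  consider (A) "i \<in> idxA Q x0" | (B) "i \<in> idxB Q x0" | (I) "i \<in> idxI Q x0"
    using feasible_index_partition(1)[OF feasible0] by blast
  then show ?thesis
  proof cases
    case A
    then have "\<nu> $ i = 0"
      using M unfolding M_stationary_def by simp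
    then show ?thesis
      using A inactive by (simp add: idxA_def)
  next
    case B
    then show ?thesis
      using S feasible_i by (simp add: idxB_def)
  next
    case I
    then have "\<gamma> $ i = 0"
      using M unfolding M_stationary_def by simp
    then show ?thesis
      using I active by (simp add: idxI_def)
  qed
qed

lemma first_order_term_nonneg:
  assumes M: "M_stationary Kx Ky gradJ hessD Q JQ x0 p lx ly fx fy \<rho> \<sigma> \<gamma> \<nu>"
    and S: "\<forall>i\<in>idxB Q x0. 0 \<le> \<gamma> $ i \<and> 0 \<le> \<nu> $ i"
    and feasible: "feasible_TV Kx Ky gradD Q (u, qx, qy, \<alpha>, r, \<delta>, \<theta>)"
    and inactive: "r0 $ i = 0 \<Longrightarrow> dl0 $ i < Q a0 $ i \<Longrightarrow> r $ i = 0"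
    and active: "0 < r0 $ i \<Longrightarrow> Q \<alpha> $ i = \<delta> $ i"
  shows "0 \<le> (r $ i - r0 $ i) * \<gamma> $ i - (\<delta> $ i - dl0 $ i) * (\<nu> $ i - \<sigma> $ i) + (\<rho> $ i + \<nu> $ i) * (Q \<alpha> $ i - Q a0 $ i)"
proof -
  have \<rho>: "0 \<le> \<rho> $ i" "Q a0 $ i * \<rho> $ i = 0" and \<sigma>: "0 \<le> \<sigma> $ i" "dl0 $ i * \<sigma> $ i = 0"
    using M unfolding M_stationary_def prod.case by blast+
  have "0 \<le> Q \<alpha> $ i" "0 \<le> \<delta> $ i"
    using feasible unfolding feasible_TV_def by auto
  then have "0 \<le> \<sigma> $ i * \<delta> $ i + \<rho> $ i * Q \<alpha> $ i"
    using \<rho> \<sigma> by simp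
  moreover have "(r $ i - r0 $ i) * \<gamma> $ i - (\<delta> $ i - dl0 $ i) * (\<nu> $ i - \<sigma> $ i) + (\<rho> $ i + \<nu> $ i) * (Q \<alpha> $ i - Q a0 $ i)
      = (r $ i - r0 $ i) * \<gamma> $ i + \<nu> $ i * ((Q \<alpha> $ i - \<delta> $ i) - (Q a0 $ i - dl0 $ i))
        + (\<sigma> $ i * \<delta> $ i + \<rho> $ i * Q \<alpha> $ i) - dl0 $ i * \<sigma> $ i - Q a0 $ i * \<rho> $ i"
    by (simp add: algebra_simps)
  ultimately show ?thesis
    using complementarity_increment_nonneg[OF M S feasible inactive active] by (simp add: \<rho>(2) \<sigma>(2))
qed

lemma lagrangian_lower_bound:
  assumes M: "M_stationary Kx Ky gradJ hessD Q JQ x0 p lx ly fx fy \<rho> \<sigma> \<gamma> \<nu>"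
    and S: "\<forall>i\<in>idxB Q x0. 0 \<le> \<gamma> $ i \<and> 0 \<le> \<nu> $ i"
    and feasible: "feasible_TV Kx Ky gradD Q (u, qx, qy, \<alpha>, r, \<delta>, \<theta>)"
    and inactive: "\<And>i. r0 $ i = 0 \<Longrightarrow> dl0 $ i < Q a0 $ i \<Longrightarrow> r $ i = 0"
    and active: "\<And>i. 0 < r0 $ i \<Longrightarrow> Q \<alpha> $ i = \<delta> $ i"
  shows "taylor_remainder J (\<lambda>x h. gradJ x \<bullet> h) u0 u
    - taylor_remainder (\<lambda>v. gradD v \<bullet> p) (\<lambda>x h. (hessD x *v h) \<bullet> p) u0 u
    + (\<Sum>i\<in>UNIV. taylor_remainder (polar_pairing (fx $ i) (fy $ i) (lx $ i) (ly $ i))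
        (polar_pairing_deriv (fx $ i) (fy $ i) (lx $ i) (ly $ i)) (r0 $ i, dl0 $ i, th0 $ i) (r $ i, \<delta> $ i, \<theta> $ i))
    - taylor_remainder (\<lambda>a. (\<rho> + \<nu>) \<bullet> Q a) (\<lambda>x h. (\<rho> + \<nu>) \<bullet> (JQ x *v h)) a0 \<alpha>
    \<le> J u - J u0"
proof -
  define first_order where "first_order i = (r $ i - r0 $ i) * \<gamma> $ i - (\<delta> $ i - dl0 $ i) * (\<nu> $ i - \<sigma> $ i)" for i
  have "(\<rho> + \<nu>) \<bullet> (JQ a0 *v h) = 0" for h
    using M dot_lmul_matrix[of "\<rho> + \<nu>" "JQ a0" h] unfolding M_stationary_def by simp
  then have Q_term: "taylor_remainder (\<lambda>a. (\<rho> + \<nu>) \<bullet> Q a) (\<lambda>x h. (\<rho> + \<nu>) \<bullet> (JQ x *v h)) a0 \<alpha>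
      = (\<Sum>i\<in>UNIV. (\<rho> $ i + \<nu> $ i) * (Q \<alpha> $ i - Q a0 $ i))"
    by (simp add: taylor_remainder_def inner_vec_def sum_subtractf[symmetric] right_diff_distrib)
  have "J u - J u0 = taylor_remainder J (\<lambda>x h. gradJ x \<bullet> h) u0 u
    - taylor_remainder (\<lambda>v. gradD v \<bullet> p) (\<lambda>x h. (hessD x *v h) \<bullet> p) u0 u
    + (\<Sum>i\<in>UNIV. taylor_remainder (polar_pairing (fx $ i) (fy $ i) (lx $ i) (ly $ i))
        (polar_pairing_deriv (fx $ i) (fy $ i) (lx $ i) (ly $ i)) (r0 $ i, dl0 $ i, th0 $ i) (r $ i, \<delta> $ i, \<theta> $ i)
        + first_order i)"
    using lagrangian_expansion[OF M feasible]
    by (simp add: taylor_remainder_def first_order_def polar_pairing_deriv_at_stationary_point[OF M])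
  moreover have "0 \<le> (\<Sum>i\<in>UNIV. first_order i + (\<rho> $ i + \<nu> $ i) * (Q \<alpha> $ i - Q a0 $ i))"
    unfolding first_order_def using first_order_term_nonneg[OF M S feasible inactive active] by (rule sum_nonneg)
  ultimately show ?thesis
    unfolding Q_term sum.distrib by linarith
qed

lemma polar_pairing_deriv2_at_stationary_point:
  assumes M: "M_stationary Kx Ky gradJ hessD Q JQ x0 p lx ly fx fy \<rho> \<sigma> \<gamma> \<nu>"
  shows "polar_pairing_deriv2 (fx $ i) (fy $ i) (lx $ i) (ly $ i) (r0 $ i, dl0 $ i, th0 $ i) (a, b, c) (a, b, c)
    = 2 * a * c * (fy $ i * cos (th0 $ i) - fx $ i * sin (th0 $ i))
      - 2 * b * c * (ly $ i * cos (th0 $ i) - lx $ i * sin (th0 $ i)) + c\<^sup>2 * (dl0 $ i * \<nu> $ i)"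
proof -
  have "dl0 $ i * \<sigma> $ i = 0"
    using M unfolding M_stationary_def prod.case by blast
  moreover have "r0 $ i * \<gamma> $ i = 0"
  proof (cases "r0 $ i = 0")
    case False
    with feasible0 have "i \<in> idxI Q x0"
      by (auto simp: feasible_TV_def idxI_def)
    with M show ?thesis
      unfolding M_stationary_def by simp
  qed simp
  ultimately have "r0 $ i * \<gamma> $ i - dl0 $ i * (\<nu> $ i - \<sigma> $ i) = - (dl0 $ i * \<nu> $ i)"
    by (auto simp: right_diff_distrib)
  then show ?thesis
    unfolding polar_pairing_deriv2_def prod.case polar_stationarity(1,2)[OF M]
    by (simp add: power2_eq_square algebra_simps)
qed

lemma polar_curvature_index_bounds:
  fixes i :: 'm
  assumes M: "M_stationary Kx Ky gradJ hessD Q JQ x0 p lx ly fx fy \<rho> \<sigma> \<gamma> \<nu>"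
    and cone: "(du, dqx, dqy, da, dr, dd, dt) \<in> critical_cone Kx Ky gradJ hessD Q JQ x0"
    and delta_pos: "\<And>i. r0 $ i = 0 \<Longrightarrow> 0 < dl0 $ i"
  defines "T \<equiv> polar_pairing_deriv2 (fx $ i) (fy $ i) (lx $ i) (ly $ i) (r0 $ i, dl0 $ i, th0 $ i)
    (dr $ i, dd $ i, dt $ i) (dr $ i, dd $ i, dt $ i)"
  shows polar_curvature_bound_active: "(dl0 $ i * \<nu> $ i - 2) * (dt $ i)\<^sup>2 - (dr $ i)\<^sup>2 * ((fx $ i)\<^sup>2 + (fy $ i)\<^sup>2)
      - (dd $ i)\<^sup>2 * (((Kx *v p) $ i)\<^sup>2 + ((Ky *v p) $ i)\<^sup>2) \<le> T"
    and polar_curvature_bound_biactive: "i \<in> idxB Q x0 \<Longrightarrow>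
      (dl0 $ i * \<nu> $ i - 1) * (dt $ i)\<^sup>2 - (dr $ i)\<^sup>2 * ((fx $ i)\<^sup>2 + (fy $ i)\<^sup>2) \<le> T"
    and polar_curvature_inactive: "i \<in> idxA Q x0 \<Longrightarrow> T = 0"
proof -
  define Pe Le where "Pe = fy $ i * cos (th0 $ i) - fx $ i * sin (th0 $ i)"
    and "Le = ly $ i * cos (th0 $ i) - lx $ i * sin (th0 $ i)"
  have lx: "lx = Kx *v p" and ly: "ly = Ky *v p" and \<nu>: "i \<in> idxA Q x0 \<Longrightarrow> \<nu> $ i = 0"
    using M unfolding M_stationary_def prod.case by blast+
  have Le_zero: "Le = 0" if "r0 $ i = 0"
    using polar_stationarity(3)[OF M, of i] delta_pos[OF that] that unfolding Le_def by simp
  have T: "T = 2 * dr $ i * dt $ i * Pe - 2 * dd $ i * dt $ i * Le + (dt $ i)\<^sup>2 * (dl0 $ i * \<nu> $ i)"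
    unfolding T_def Pe_def Le_def by (rule polar_pairing_deriv2_at_stationary_point[OF M])
  have cross_term: "- (c\<^sup>2) - a\<^sup>2 * \<Psi> \<le> 2 * a * c * P" if "P\<^sup>2 \<le> \<Psi>" for a c P \<Psi> :: real
  proof -
    have "0 \<le> (c + a * P)\<^sup>2" "a\<^sup>2 * P\<^sup>2 \<le> a\<^sup>2 * \<Psi>"
      using that by (simp_all add: mult_left_mono)
    then show ?thesis
      by (simp add: power2_eq_square algebra_simps)
  qed
  have Pe_le: "Pe\<^sup>2 \<le> (fx $ i)\<^sup>2 + (fy $ i)\<^sup>2" and Le_le: "Le\<^sup>2 \<le> ((Kx *v p) $ i)\<^sup>2 + ((Ky *v p) $ i)\<^sup>2"
    using rotated_component_sq_le[of "fy $ i" "th0 $ i" "- fx $ i"] rotated_component_sq_le[of "ly $ i" "th0 $ i" "- lx $ i"]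
    unfolding Pe_def Le_def lx ly by (simp_all add: algebra_simps)
  have "- (dt $ i)\<^sup>2 - (dr $ i)\<^sup>2 * ((fx $ i)\<^sup>2 + (fy $ i)\<^sup>2) \<le> 2 * dr $ i * dt $ i * Pe"
    and "- (dt $ i)\<^sup>2 - (dd $ i)\<^sup>2 * (((Kx *v p) $ i)\<^sup>2 + ((Ky *v p) $ i)\<^sup>2) \<le> - (2 * dd $ i * dt $ i * Le)"
    using cross_term[where a="dr $ i" and c="dt $ i", OF Pe_le] cross_term[where a="- dd $ i" and c="dt $ i", OF Le_le]
    by simp_all
  then show "(dl0 $ i * \<nu> $ i - 2) * (dt $ i)\<^sup>2 - (dr $ i)\<^sup>2 * ((fx $ i)\<^sup>2 + (fy $ i)\<^sup>2)
      - (dd $ i)\<^sup>2 * (((Kx *v p) $ i)\<^sup>2 + ((Ky *v p) $ i)\<^sup>2) \<le> T"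
    and "i \<in> idxB Q x0 \<Longrightarrow> (dl0 $ i * \<nu> $ i - 1) * (dt $ i)\<^sup>2 - (dr $ i)\<^sup>2 * ((fx $ i)\<^sup>2 + (fy $ i)\<^sup>2) \<le> T"
    unfolding T using Le_zero by (auto simp: idxB_def algebra_simps)
  show "i \<in> idxA Q x0 \<Longrightarrow> T = 0"
    using cone Le_zero \<nu> unfolding T by (auto simp: critical_cone_def idxA_def)
qed

lemma polar_curvature_lower_bound:
  assumes M: "M_stationary Kx Ky gradJ hessD Q JQ x0 p lx ly fx fy \<rho> \<sigma> \<gamma> \<nu>"
    and cone: "(du, dqx, dqy, da, dr, dd, dt) \<in> critical_cone Kx Ky gradJ hessD Q JQ x0"
    and delta_pos: "\<And>i. r0 $ i = 0 \<Longrightarrow> 0 < dl0 $ i"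
  shows "(\<Sum>i\<in>idxI Q x0. (dl0 $ i * \<nu> $ i - 2) * (dt $ i)\<^sup>2) + (\<Sum>i\<in>idxB Q x0. (dl0 $ i * \<nu> $ i - 1) * (dt $ i)\<^sup>2)
      - (\<Sum>i\<in>idxI Q x0 \<union> idxB Q x0. (fx $ i)\<^sup>2 + (fy $ i)\<^sup>2) * (opnormK Kx Ky)\<^sup>2 * (norm du)\<^sup>2
      - (\<Sum>i\<in>idxI Q x0. ((Kx *v p) $ i)\<^sup>2 + ((Ky *v p) $ i)\<^sup>2) * (\<Sum>i\<in>idxI Q x0. ((JQ a0 *v da) $ i)\<^sup>2)
    \<le> (\<Sum>i\<in>UNIV. polar_pairing_deriv2 (fx $ i) (fy $ i) (lx $ i) (ly $ i) (r0 $ i, dl0 $ i, th0 $ i)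
        (dr $ i, dd $ i, dt $ i) (dr $ i, dd $ i, dt $ i))"
proof -
  define I B A where "I = idxI Q x0" and "B = idxB Q x0" and "A = idxA Q x0"
  define T where "T i = polar_pairing_deriv2 (fx $ i) (fy $ i) (lx $ i) (ly $ i) (r0 $ i, dl0 $ i, th0 $ i)
    (dr $ i, dd $ i, dt $ i) (dr $ i, dd $ i, dt $ i)" for i
  define \<Phi> \<Lambda> where "\<Phi> i = (fx $ i)\<^sup>2 + (fy $ i)\<^sup>2" and "\<Lambda> i = ((Kx *v p) $ i)\<^sup>2 + ((Ky *v p) $ i)\<^sup>2" for i
  define C where "C = (opnormK Kx Ky)\<^sup>2 * (norm du)\<^sup>2"
  note partition = feasible_index_partition[OF feasible0, folded I_def B_def A_def]
  have "(\<Sum>i\<in>I \<union> B. (dr $ i)\<^sup>2 * \<Phi> i) \<le> (\<Sum>i\<in>I \<union> B. C * \<Phi> i)"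
    using critical_cone_radial_sq_le[OF cone] by (intro sum_mono mult_right_mono) (simp_all add: C_def \<Phi>_def)
  then have dr_sum: "(\<Sum>i\<in>I. (dr $ i)\<^sup>2 * \<Phi> i) + (\<Sum>i\<in>B. (dr $ i)\<^sup>2 * \<Phi> i) \<le> (\<Sum>i\<in>I \<union> B. \<Phi> i) * C"
    using partition(2) by (simp add: sum.union_disjoint sum_distrib_left[symmetric] distrib_left mult.commute)
  have "(\<Sum>i\<in>I. (dd $ i)\<^sup>2 * \<Lambda> i) = (\<Sum>i\<in>I. ((JQ a0 *v da) $ i)\<^sup>2 * \<Lambda> i)"
    using cone by (intro sum.cong) (auto simp: I_def critical_cone_def)
  also have "\<dots> \<le> (\<Sum>i\<in>I. \<Lambda> i) * (\<Sum>i\<in>I. ((JQ a0 *v da) $ i)\<^sup>2)"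
    by (subst mult.commute, rule sum_mult_le_sum_mult_sum) (simp_all add: \<Lambda>_def)
  finally have dd_sum: "(\<Sum>i\<in>I. (dd $ i)\<^sup>2 * \<Lambda> i) \<le> (\<Sum>i\<in>I. \<Lambda> i) * (\<Sum>i\<in>I. ((JQ a0 *v da) $ i)\<^sup>2)" .
  have "(\<Sum>i\<in>UNIV. T i) = (\<Sum>i\<in>I. T i) + (\<Sum>i\<in>B. T i) + (\<Sum>i\<in>A. T i)"
    unfolding partition(1)[symmetric] using partition(2,3) by (simp add: sum.union_disjoint)
  also have "\<dots> \<ge> (\<Sum>i\<in>I. (dl0 $ i * \<nu> $ i - 2) * (dt $ i)\<^sup>2 - (dr $ i)\<^sup>2 * \<Phi> i - (dd $ i)\<^sup>2 * \<Lambda> i)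
      + (\<Sum>i\<in>B. (dl0 $ i * \<nu> $ i - 1) * (dt $ i)\<^sup>2 - (dr $ i)\<^sup>2 * \<Phi> i)"
    using polar_curvature_index_bounds[OF M cone delta_pos] unfolding T_def \<Phi>_def \<Lambda>_def A_def B_def
    by (simp add: add_mono sum_mono)
  finally have "(\<Sum>i\<in>I. (dl0 $ i * \<nu> $ i - 2) * (dt $ i)\<^sup>2) + (\<Sum>i\<in>B. (dl0 $ i * \<nu> $ i - 1) * (dt $ i)\<^sup>2)
      - ((\<Sum>i\<in>I. (dr $ i)\<^sup>2 * \<Phi> i) + (\<Sum>i\<in>B. (dr $ i)\<^sup>2 * \<Phi> i)) - (\<Sum>i\<in>I. (dd $ i)\<^sup>2 * \<Lambda> i)
      \<le> (\<Sum>i\<in>UNIV. T i)"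
    by (simp add: sum_subtractf)
  then show ?thesis
    using dr_sum dd_sum unfolding I_def B_def T_def \<Phi>_def \<Lambda>_def C_def by (simp add: mult.assoc)
qed

context
  fixes u :: "nat \<Rightarrow> real^'d" and qx qy :: "nat \<Rightarrow> real^'m" and al :: "nat \<Rightarrow> real^'k"
    and r dl th :: "nat \<Rightarrow> real^'m" and t :: "nat \<Rightarrow> real"
    and du :: "real^'d" and dqx dqy :: "real^'m" and da :: "real^'k" and dr dd dt :: "real^'m"
  assumes feasible: "\<And>n. feasible_TV Kx Ky gradD Q (u n, qx n, qy n, al n, r n, dl n, th n)"
    and descent: "\<And>n. J (u n) \<le> J u0"
    and along: "approaches_along (\<lambda>n. (u n, qx n, qy n, al n, r n, dl n, th n)) x0 t (du, dqx, dqy, da, dr, dd, dt)"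
begin

lemma along_components:
  shows along_u: "approaches_along u u0 t du"
    and along_qx: "approaches_along qx qx0 t dqx" and along_qy: "approaches_along qy qy0 t dqy"
    and along_al: "approaches_along al a0 t da"
    and along_r: "approaches_along (\<lambda>n. r n $ i) (r0 $ i) t (dr $ i)"
    and along_dl: "approaches_along (\<lambda>n. dl n $ i) (dl0 $ i) t (dd $ i)"
    and along_th: "approaches_along (\<lambda>n. th n $ i) (th0 $ i) t (dt $ i)"
  using along by (simp_all add: approaches_along_vec_nth)

lemma along_Q: "approaches_along (\<lambda>n. Q (al n) $ i) (Q a0 $ i) t ((JQ a0 *v da) $ i)"
  using approaches_along_vec_nth[OF approaches_along_has_derivative[OF Q_d1 along_al]] .

lemma eventually_inactive:
  assumes "dl0 $ i < Q a0 $ i"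
  shows "eventually (\<lambda>n. r n $ i = 0) sequentially"
proof -
  have lim: "(\<lambda>n. Q (al n) $ i - dl n $ i) \<longlonglongrightarrow> Q a0 $ i - dl0 $ i"
    using along_Q along_dl by (intro tendsto_diff approaches_along_tendsto)
  have "eventually (\<lambda>n. 0 < Q (al n) $ i - dl n $ i) sequentially"
    using order_tendstoD(1)[OF lim, of 0] assms by simp
  then show ?thesis
    by (rule eventually_mono) (use feasible in \<open>force simp: feasible_TV_def\<close>)
qed

lemma eventually_active:
  assumes "0 < r0 $ i"
  shows "eventually (\<lambda>n. Q (al n) $ i = dl n $ i) sequentially"
proof -
  have "eventually (\<lambda>n. 0 < r n $ i) sequentially"
    using order_tendstoD(1)[OF approaches_along_tendsto[OF along_r] assms] .
  then show ?thesis
    by (rule eventually_mono) (use feasible in \<open>force simp: feasible_TV_def\<close>)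
qed

lemma tangent_polar_equations:
  shows "(Kx *v du) $ i = cos (th0 $ i) * dr $ i - r0 $ i * sin (th0 $ i) * dt $ i"
    and "(Ky *v du) $ i = sin (th0 $ i) * dr $ i + r0 $ i * cos (th0 $ i) * dt $ i"
    and "dqx $ i = cos (th0 $ i) * dd $ i - dl0 $ i * sin (th0 $ i) * dt $ i"
    and "dqy $ i = sin (th0 $ i) * dd $ i + dl0 $ i * cos (th0 $ i) * dt $ i"
proof -
  have polar: "(Kx *v u n) $ i = r n $ i * cos (th n $ i)" "(Ky *v u n) $ i = r n $ i * sin (th n $ i)"
    "qx n $ i = dl n $ i * cos (th n $ i)" "qy n $ i = dl n $ i * sin (th n $ i)" for n
    using feasible[of n] by (simp_all add: feasible_TV_def)
  have polar0: "(Kx *v u0) $ i = r0 $ i * cos (th0 $ i)" "(Ky *v u0) $ i = r0 $ i * sin (th0 $ i)"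
    "qx0 $ i = dl0 $ i * cos (th0 $ i)" "qy0 $ i = dl0 $ i * sin (th0 $ i)"
    using feasible0 by (simp_all add: feasible_TV_def)
  have "approaches_along (\<lambda>n. (Kx *v u n) $ i) ((Kx *v u0) $ i) t ((Kx *v du) $ i)"
    by (rule approaches_along_vec_nth[OF approaches_along_matrix_vector_mult[OF along_u]])
  then have "approaches_along (\<lambda>n. r n $ i * cos (th n $ i)) (r0 $ i * cos (th0 $ i)) t ((Kx *v du) $ i)"
    unfolding polar polar0 .
  then show "(Kx *v du) $ i = cos (th0 $ i) * dr $ i - r0 $ i * sin (th0 $ i) * dt $ i"
    using approaches_along_polar(1)[OF along_r along_th] by (rule approaches_along_unique)
  have "approaches_along (\<lambda>n. (Ky *v u n) $ i) ((Ky *v u0) $ i) t ((Ky *v du) $ i)"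
    by (rule approaches_along_vec_nth[OF approaches_along_matrix_vector_mult[OF along_u]])
  then have "approaches_along (\<lambda>n. r n $ i * sin (th n $ i)) (r0 $ i * sin (th0 $ i)) t ((Ky *v du) $ i)"
    unfolding polar polar0 .
  then show "(Ky *v du) $ i = sin (th0 $ i) * dr $ i + r0 $ i * cos (th0 $ i) * dt $ i"
    using approaches_along_polar(2)[OF along_r along_th] by (rule approaches_along_unique)
  have "approaches_along (\<lambda>n. qx n $ i) (qx0 $ i) t (dqx $ i)"
    by (rule approaches_along_vec_nth[OF along_qx])
  then have "approaches_along (\<lambda>n. dl n $ i * cos (th n $ i)) (dl0 $ i * cos (th0 $ i)) t (dqx $ i)"
    unfolding polar polar0 .
  then show "dqx $ i = cos (th0 $ i) * dd $ i - dl0 $ i * sin (th0 $ i) * dt $ i"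
    using approaches_along_polar(1)[OF along_dl along_th] by (rule approaches_along_unique)
  have "approaches_along (\<lambda>n. qy n $ i) (qy0 $ i) t (dqy $ i)"
    by (rule approaches_along_vec_nth[OF along_qy])
  then have "approaches_along (\<lambda>n. dl n $ i * sin (th n $ i)) (dl0 $ i * sin (th0 $ i)) t (dqy $ i)"
    unfolding polar polar0 .
  then show "dqy $ i = sin (th0 $ i) * dd $ i + dl0 $ i * cos (th0 $ i) * dt $ i"
    using approaches_along_polar(2)[OF along_dl along_th] by (rule approaches_along_unique)
qed

lemma tangent_stationarity_equation: "- (hessD u0 *v du) - transpose Kx *v dqx - transpose Ky *v dqy = 0"
proof -
  define L where "L = (\<lambda>(a, b). - (transpose Kx *v a + transpose Ky *v b))"
  have gradD_L: "gradD v = L (qx', qy')" if "feasible_TV Kx Ky gradD Q (v, qx', qy', \<alpha>, r', \<delta>, \<theta>)"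
    for v qx' qy' \<alpha> r' \<delta> \<theta>
  proof -
    have "gradD v + transpose Kx *v qx' + transpose Ky *v qy' = 0"
      using that unfolding feasible_TV_def prod.case by blast
    then show ?thesis
      unfolding L_def prod.case by (metis add.assoc eq_neg_iff_add_eq_0)
  qed
  have "bounded_linear L"
    unfolding L_def case_prod_beta
    by (intro bounded_linear_minus bounded_linear_add
        bounded_linear_compose[OF matrix_vector_mul_bounded_linear] bounded_linear_fst bounded_linear_snd)
  then have "approaches_along (\<lambda>n. L (qx n, qy n)) (L (qx0, qy0)) t (L (dqx, dqy))"
    by (rule approaches_along_bounded_linear) (simp add: along_qx along_qy)
  then have "approaches_along (\<lambda>n. gradD (u n)) (gradD u0) t (L (dqx, dqy))"
    by (simp only: gradD_L[OF feasible] gradD_L[OF feasible0])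
  then have "hessD u0 *v du = L (dqx, dqy)"
    by (rule approaches_along_unique[OF approaches_along_has_derivative[OF D_d2 along_u]])
  then show ?thesis
    unfolding L_def prod.case by (simp add: diff_diff_eq del: transpose_matrix_vector)
qed

lemma tangent_in_critical_cone: "(du, dqx, dqy, da, dr, dd, dt) \<in> critical_cone Kx Ky gradJ hessD Q JQ x0"
proof -
  have feasible_i: "0 \<le> Q (al n) $ i" "0 \<le> dl n $ i" "0 \<le> r n $ i" "dl n $ i \<le> Q (al n) $ i"
    "(Q (al n) $ i - dl n $ i) * r n $ i = 0" for n i
    using feasible[of n] by (auto simp: feasible_TV_def)
  have gap: "approaches_along (\<lambda>n. Q (al n) $ i - dl n $ i) (Q a0 $ i - dl0 $ i) t ((JQ a0 *v da) $ i - dd $ i)" for i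
    using along_Q along_dl by (rule approaches_along_diff)
  have "gradJ u0 \<bullet> du \<le> 0"
    using approaches_along_has_derivative[OF J_d1 along_u] descent by (rule approaches_along_nonpos)
  moreover have "0 \<le> (JQ a0 *v da) $ i" if "Q a0 $ i = 0" for i
    using along_Q by (rule approaches_along_nonneg) (simp add: feasible_i that)
  moreover have "0 \<le> dd $ i" if "dl0 $ i = 0" for i
    using along_dl by (rule approaches_along_nonneg) (simp add: feasible_i that)
  moreover have "(JQ a0 *v da) $ i = dd $ i" if "0 < r0 $ i" "Q a0 $ i = dl0 $ i" for i
    using approaches_along_eventually_const[OF gap] eventually_active[OF that(1)] that(2) by simp
  moreover have "dr $ i = 0" if "r0 $ i = 0" "dl0 $ i < Q a0 $ i" for i
    using approaches_along_eventually_const[OF along_r] eventually_inactive[OF that(2)] that(1) by simp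
  moreover have "0 \<le> (JQ a0 *v da) $ i - dd $ i \<and> 0 \<le> dr $ i \<and> ((JQ a0 *v da) $ i - dd $ i) * dr $ i = 0"
    if "r0 $ i = 0" "Q a0 $ i = dl0 $ i" for i
  proof (intro conjI)
    show "0 \<le> (JQ a0 *v da) $ i - dd $ i"
      using gap by (rule approaches_along_nonneg) (simp add: feasible_i that)
    show "0 \<le> dr $ i"
      using along_r by (rule approaches_along_nonneg) (simp add: feasible_i that)
    have "approaches_along (\<lambda>n. Q (al n) $ i - dl n $ i) 0 t ((JQ a0 *v da) $ i - dd $ i)"
      and "approaches_along (\<lambda>n. r n $ i) 0 t (dr $ i)"
      using gap[of i] along_r[of i] that by simp_all
    then show "((JQ a0 *v da) $ i - dd $ i) * dr $ i = 0"
      by (rule approaches_along_complementarity) (simp add: feasible_i)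
  qed
  ultimately show ?thesis
    unfolding critical_cone_def idxI_def idxA_def idxB_def
    using tangent_stationarity_equation tangent_polar_equations by auto
qed

lemma second_order_remainder_limit:
  "(\<lambda>n. (taylor_remainder J (\<lambda>x h. gradJ x \<bullet> h) u0 (u n)
      - taylor_remainder (\<lambda>v. gradD v \<bullet> p) (\<lambda>x h. (hessD x *v h) \<bullet> p) u0 (u n)
      + (\<Sum>i\<in>UNIV. taylor_remainder (polar_pairing (fx $ i) (fy $ i) (lx $ i) (ly $ i))
          (polar_pairing_deriv (fx $ i) (fy $ i) (lx $ i) (ly $ i)) (r0 $ i, dl0 $ i, th0 $ i) (r n $ i, dl n $ i, th n $ i))
      - taylor_remainder (\<lambda>a. c \<bullet> Q a) (\<lambda>x h. c \<bullet> (JQ x *v h)) a0 (al n)) / (t n)\<^sup>2)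
   \<longlonglongrightarrow> ((hessJ u0 *v du) \<bullet> du - (D3 u0 du *v du) \<bullet> p
      + (\<Sum>i\<in>UNIV. polar_pairing_deriv2 (fx $ i) (fy $ i) (lx $ i) (ly $ i) (r0 $ i, dl0 $ i, th0 $ i)
          (dr $ i, dd $ i, dt $ i) (dr $ i, dd $ i, dt $ i))
      - (\<Sum>i\<in>UNIV. c $ i * ((HQ a0 i *v da) \<bullet> da))) / 2"
proof -
  have continuous_at: "isCont f z" if "continuous_on UNIV f" for f :: "_ \<Rightarrow> real" and z
    using that by (simp add: continuous_on_eq_continuous_at)
  have fst_comp: "continuous_on UNIV (\<lambda>z. f (fst z))" if "continuous_on UNIV f" for f :: "_ \<Rightarrow> 'b::topological_space"
    using continuous_on_compose2[OF that continuous_on_fst[OF continuous_on_id]] by simp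
  have limJ: "(\<lambda>n. taylor_remainder J (\<lambda>x h. gradJ x \<bullet> h) u0 (u n) / (t n)\<^sup>2) \<longlonglongrightarrow> (hessJ u0 *v du) \<bullet> du / 2"
    by (rule approaches_along_second_order[where f''="\<lambda>x h k. (hessJ x *v k) \<bullet> h",
          OF J_d1 has_derivative_inner_left[OF J_d2] _ _ along_u])
      (auto simp: matrix_vector_mult_scaleR power2_eq_square
        intro!: continuous_at continuous_intros fst_comp[OF J_C2])
  have limD: "(\<lambda>n. taylor_remainder (\<lambda>v. gradD v \<bullet> p) (\<lambda>x h. (hessD x *v h) \<bullet> p) u0 (u n) / (t n)\<^sup>2)
      \<longlonglongrightarrow> (D3 u0 du *v du) \<bullet> p / 2"
    by (rule approaches_along_second_order[where f''="\<lambda>x h k. (D3 x k *v h) \<bullet> p",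
          OF has_derivative_inner_left[OF D_d2] has_derivative_inner_left[OF has_derivative_hessD_apply] _ _ along_u])
      (auto simp: linear_scale[OF linear_D3] scaleR_matrix_vector_assoc[symmetric] matrix_vector_mult_scaleR
        power2_eq_square intro!: continuous_at continuous_intros continuous_on_D3)
  have limP: "(\<lambda>n. taylor_remainder (polar_pairing (fx $ i) (fy $ i) (lx $ i) (ly $ i))
        (polar_pairing_deriv (fx $ i) (fy $ i) (lx $ i) (ly $ i)) (r0 $ i, dl0 $ i, th0 $ i) (r n $ i, dl n $ i, th n $ i)
        / (t n)\<^sup>2)
      \<longlonglongrightarrow> polar_pairing_deriv2 (fx $ i) (fy $ i) (lx $ i) (ly $ i) (r0 $ i, dl0 $ i, th0 $ i)
            (dr $ i, dd $ i, dt $ i) (dr $ i, dd $ i, dt $ i) / 2" for i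
    using along_r along_dl along_th by (intro approaches_along_polar_pairing_second_order) simp
  have limQ: "(\<lambda>n. taylor_remainder (\<lambda>a. c \<bullet> Q a) (\<lambda>x h. c \<bullet> (JQ x *v h)) a0 (al n) / (t n)\<^sup>2)
      \<longlonglongrightarrow> (\<Sum>i\<in>UNIV. c $ i * ((HQ a0 i *v da) \<bullet> da)) / 2"
    by (rule approaches_along_second_order[where f''="\<lambda>x h k. \<Sum>i\<in>UNIV. c $ i * ((HQ x i *v k) \<bullet> h)",
          OF has_derivative_inner_right[OF Q_d1] has_derivative_weighted_JQ _ _ along_al])
      (auto simp: matrix_vector_mult_scaleR power2_eq_square sum_distrib_left algebra_simps
        intro!: continuous_at continuous_intros fst_comp[OF Q_C2])
  show ?thesis
    unfolding diff_divide_distrib add_divide_distrib sum_divide_distrib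
    by (intro tendsto_add tendsto_diff tendsto_sum limJ limD limP limQ[unfolded sum_divide_distrib])
qed

lemma second_order_limit_nonpos:
  assumes M: "M_stationary Kx Ky gradJ hessD Q JQ x0 p lx ly fx fy \<rho> \<sigma> \<gamma> \<nu>"
    and S: "\<forall>i\<in>idxB Q x0. 0 \<le> \<gamma> $ i \<and> 0 \<le> \<nu> $ i"
  shows "(hessJ u0 *v du) \<bullet> du - (D3 u0 du *v du) \<bullet> p
    + (\<Sum>i\<in>UNIV. polar_pairing_deriv2 (fx $ i) (fy $ i) (lx $ i) (ly $ i) (r0 $ i, dl0 $ i, th0 $ i)
        (dr $ i, dd $ i, dt $ i) (dr $ i, dd $ i, dt $ i))
    - (\<Sum>i\<in>UNIV. (\<rho> $ i + \<nu> $ i) * ((HQ a0 i *v da) \<bullet> da)) \<le> 0"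
proof -
  have "eventually (\<lambda>n. \<forall>i. (r0 $ i = 0 \<longrightarrow> dl0 $ i < Q a0 $ i \<longrightarrow> r n $ i = 0)
      \<and> (0 < r0 $ i \<longrightarrow> Q (al n) $ i = dl n $ i)) sequentially"
    using eventually_inactive eventually_active
    by (intro eventually_all_finite) (auto intro: eventually_conj eventually_mono)
  then have "eventually (\<lambda>n. (taylor_remainder J (\<lambda>x h. gradJ x \<bullet> h) u0 (u n)
      - taylor_remainder (\<lambda>v. gradD v \<bullet> p) (\<lambda>x h. (hessD x *v h) \<bullet> p) u0 (u n)
      + (\<Sum>i\<in>UNIV. taylor_remainder (polar_pairing (fx $ i) (fy $ i) (lx $ i) (ly $ i))
          (polar_pairing_deriv (fx $ i) (fy $ i) (lx $ i) (ly $ i)) (r0 $ i, dl0 $ i, th0 $ i) (r n $ i, dl n $ i, th n $ i))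
      - taylor_remainder (\<lambda>a. (\<rho> + \<nu>) \<bullet> Q a) (\<lambda>x h. (\<rho> + \<nu>) \<bullet> (JQ x *v h)) a0 (al n)) / (t n)\<^sup>2 \<le> 0)
    sequentially"
    by (rule eventually_mono)
      (intro divide_nonpos_nonneg order_trans[OF lagrangian_lower_bound[OF M S feasible]], auto simp: descent)
  from tendsto_le[OF trivial_limit_sequentially tendsto_const second_order_remainder_limit this]
  show ?thesis
    by simp
qed

lemma sosc_form_nonpos:
  assumes M: "M_stationary Kx Ky gradJ hessD Q JQ x0 p lx ly fx fy \<rho> \<sigma> \<gamma> \<nu>"
    and S: "\<forall>i\<in>idxB Q x0. 0 \<le> \<gamma> $ i \<and> 0 \<le> \<nu> $ i"
    and delta_pos: "\<And>i. r0 $ i = 0 \<Longrightarrow> 0 < dl0 $ i"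
  shows "sosc_form Kx Ky D3 hessJ Q JQ HQ x0 p fx fy \<rho> \<nu> (du, dqx, dqy, da, dr, dd, dt) \<le> 0"
proof -
  have "(D3 u0 du *v du) \<bullet> p = (D3 u0 p *v du) \<bullet> du"
    using D3_symmetric_23[of u0 du du p] D3_symmetric_12[of u0 du p du] by simp
  moreover have "(\<Sum>i\<in>UNIV. (\<rho> $ i + \<nu> $ i) * ((HQ a0 i *v da) \<bullet> da)) = (\<Sum>i\<in>UNIV. (\<rho> $ i + \<nu> $ i) * (da \<bullet> (HQ a0 i *v da)))"
    by (simp add: inner_commute)
  ultimately show ?thesis
    using second_order_limit_nonpos[OF M S] polar_curvature_lower_bound[OF M tangent_in_critical_cone delta_pos]
    unfolding sosc_form_def by simp
qed

end


lemma strict_local_min_if_sosc: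
  assumes M: "M_stationary Kx Ky gradJ hessD Q JQ x0 p lx ly fx fy \<rho> \<sigma> \<gamma> \<nu>"
    and S: "\<forall>i\<in>idxB Q x0. 0 \<le> \<gamma> $ i \<and> 0 \<le> \<nu> $ i"
    and B_cap: "idxB Q x0 \<inter> {i. Q a0 $ i = 0} = {}"
    and sosc: "\<And>d. d \<in> critical_cone Kx Ky gradJ hessD Q JQ x0 \<Longrightarrow> d \<noteq> 0 \<Longrightarrow>
      0 < sosc_form Kx Ky D3 hessJ Q JQ HQ x0 p fx fy \<rho> \<nu> d"
  shows "strict_local_min {x. feasible_TV Kx Ky gradD Q x} J x0"
proof (rule ccontr)
  assume "\<not> ?thesis"
  then have "\<not> (\<exists>\<epsilon>>0. \<forall>y\<in>{x. feasible_TV Kx Ky gradD Q x}. y \<noteq> x0 \<and> dist y x0 < \<epsilon> \<longrightarrow> J u0 < J (fst y))"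
    using feasible0 unfolding strict_local_min_def by simp
  then obtain Y d where feasible: "\<And>n. Y n \<in> {x. feasible_TV Kx Ky gradD Q x}"
    and descent: "\<And>n. J (fst (Y n)) \<le> J u0"
    and along: "approaches_along Y x0 (\<lambda>n. norm (Y n - x0)) d" and "d \<noteq> 0"
    by (rule not_strict_minimum_imp_approaching_sequence[where f="\<lambda>y. J (fst y)" and x=x0, unfolded fst_conv]) blast
  obtain u qx qy al r dl th where Y: "Y = (\<lambda>n. (u n, qx n, qy n, al n, r n, dl n, th n))"
    by (rule seq_tuple7_cases)
  obtain du dqx dqy da dr dd dt where d: "d = (du, dqx, dqy, da, dr, dd, dt)"
    using prod_cases7 by blast
  note tangent = feasible[unfolded Y mem_Collect_eq] descent[unfolded Y fst_conv] along[unfolded Y d]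
  have delta_pos: "0 < dl0 $ i" if "r0 $ i = 0" for i
    using delta_pos_if_sosc[OF feasible0 B_cap sosc that] .
  have "0 < sosc_form Kx Ky D3 hessJ Q JQ HQ x0 p fx fy \<rho> \<nu> d"
    using sosc[OF tangent_in_critical_cone[OF tangent, folded d] \<open>d \<noteq> 0\<close>] .
  moreover have "sosc_form Kx Ky D3 hessJ Q JQ HQ x0 p fx fy \<rho> \<nu> d \<le> 0"
    unfolding d by (rule sosc_form_nonpos[OF tangent M S delta_pos])
  ultimately show False
    by simp
qed

end

end

theorem theorem3p5:
  fixes Kx Ky :: "real^'d^'m"
    and D :: "real^'d \<Rightarrow> real" and gradD :: "real^'d \<Rightarrow> real^'d"
    and hessD :: "real^'d \<Rightarrow> real^'d^'d" and D3 :: "real^'d \<Rightarrow> real^'d \<Rightarrow> real^'d^'d"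
    and J :: "real^'d \<Rightarrow> real" and gradJ :: "real^'d \<Rightarrow> real^'d" and hessJ :: "real^'d \<Rightarrow> real^'d^'d"
    and Q :: "real^'k \<Rightarrow> real^'m" and JQ :: "real^'k \<Rightarrow> real^'k^'m"
    and HQ :: "real^'k \<Rightarrow> 'm \<Rightarrow> real^'k^'k"
    and xs :: "('d,'m,'k) pt"
  assumes D_convex: "convex_on UNIV D"
    and D_d1: "\<And>u. (D has_derivative (\<lambda>h. gradD u \<bullet> h)) (at u)"
    and D_d2: "\<And>u. (gradD has_derivative (\<lambda>h. hessD u *v h)) (at u)"
    and D_d3: "\<And>u. (hessD has_derivative D3 u) (at u)"
    and D_C3: "\<And>h. continuous_on UNIV (\<lambda>u. D3 u h)"
    and J_d1: "\<And>u. (J has_derivative (\<lambda>h. gradJ u \<bullet> h)) (at u)"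
    and J_d2: "\<And>u. (gradJ has_derivative (\<lambda>h. hessJ u *v h)) (at u)"
    and J_C2: "continuous_on UNIV hessJ"
    and Q_d1: "\<And>a. (Q has_derivative (\<lambda>h. JQ a *v h)) (at a)"
    and Q_d2: "\<And>a i. ((\<lambda>b. JQ b $ i) has_derivative (\<lambda>h. HQ a i *v h)) (at a)"
    and Q_C2: "\<And>i. continuous_on UNIV (\<lambda>a. HQ a i)"
    and feas: "feasible_TV Kx Ky gradD Q xs"
    and full_rank: "rank (transpose (JQ (fst (snd (snd (snd xs)))))) = min CARD('k) CARD('m)"
    and B_cap: "idxB Q xs \<inter> {i. Q (fst (snd (snd (snd xs)))) $ i = 0} = {}"
    and S_stat: "S_stationary_point Kx Ky gradJ hessD Q JQ xs"
    and SOSC: "\<And>p lx ly fx fy \<rho> \<sigma> \<gamma> \<nu> du dqx dqy da dr dd dt.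
       M_stationary Kx Ky gradJ hessD Q JQ xs p lx ly fx fy \<rho> \<sigma> \<gamma> \<nu> \<Longrightarrow>
       (du, dqx, dqy, da, dr, dd, dt) \<in> critical_cone Kx Ky gradJ hessD Q JQ xs \<Longrightarrow>
       (du, dqx, dqy, da, dr, dd, dt) \<noteq> 0 \<Longrightarrow>
       (case xs of (u, qx, qy, \<alpha>, r, \<delta>, \<theta>) \<Rightarrow>
          (hessJ u *v du) \<bullet> du
          - (D3 u p *v du) \<bullet> du
          - (\<Sum>i\<in>idxI Q xs \<union> idxB Q xs. (fx $ i)\<^sup>2 + (fy $ i)\<^sup>2) * (opnormK Kx Ky)\<^sup>2 * (norm du)\<^sup>2
          - (\<Sum>i\<in>UNIV. (\<rho> $ i + \<nu> $ i) * (da \<bullet> (HQ \<alpha> i *v da)))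
          - (\<Sum>i\<in>idxI Q xs. ((Kx *v p) $ i)\<^sup>2 + ((Ky *v p) $ i)\<^sup>2)
              * (\<Sum>i\<in>idxI Q xs. ((JQ \<alpha> *v da) $ i)\<^sup>2)
          + (\<Sum>i\<in>idxI Q xs. (\<delta> $ i * \<nu> $ i - 2) * (dt $ i)\<^sup>2)
          + (\<Sum>i\<in>idxB Q xs. (\<delta> $ i * \<nu> $ i - 1) * (dt $ i)\<^sup>2)) > 0"
  shows "strict_local_min {x. feasible_TV Kx Ky gradD Q x} J xs"
proof -
  interpret TV_problem Kx Ky D gradD hessD D3 J gradJ hessJ Q JQ HQ
    by unfold_locales (fact D_d1 D_d2 D_d3 D_C3 J_d1 J_d2 J_C2 Q_d1 Q_d2 Q_C2)+
  obtain u0 qx0 qy0 a0 r0 dl0 th0 where xs: "xs = (u0, qx0, qy0, a0, r0, dl0, th0)"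
    using prod_cases7 by blast
  obtain p lx ly fx fy \<rho> \<sigma> \<gamma> \<nu> where M: "M_stationary Kx Ky gradJ hessD Q JQ xs p lx ly fx fy \<rho> \<sigma> \<gamma> \<nu>"
    and S: "\<forall>i\<in>idxB Q xs. 0 \<le> \<gamma> $ i \<and> 0 \<le> \<nu> $ i"
    using S_stat unfolding S_stationary_point_def by blast
  have "0 < sosc_form Kx Ky D3 hessJ Q JQ HQ xs p fx fy \<rho> \<nu> d"
    if "d \<in> critical_cone Kx Ky gradJ hessD Q JQ xs" "d \<noteq> 0" for d
    using that SOSC[OF M] by (cases d rule: prod_cases7) (simp add: sosc_form_def)
  then show ?thesis
    using strict_local_min_if_sosc[OF feas[unfolded xs] M[unfolded xs] S[unfolded xs]
        B_cap[unfolded xs fst_conv snd_conv]]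
    unfolding xs by blast
qed

end
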